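(* Let $(B_t)_{t\ge0}$ be a standard Brownian motion and $\mathcal{F}_{s,t}=\sigma(B_u;u\le s;\ B_u;u\ge t)$ for $0\le s<t$. Let $f_+,f_-\in L^1(\mathbb{R}_+)\cap L^2(\mathbb{R}_+)$ and $C\in\mathbb{R}$. For $0\le s<t$ define $$M_{s,t}=\int_0^s f_-(u)\,dB_u+\int_t^\infty f_+(u)\,dB_u+\frac{B_t-B_s}{t-s}\left(C-\int_0^s f_-(u)\,du-\int_t^\infty f_+(u)\,du\right).$$ Then $(M_{s,t})_{0\le s<t<\infty}$ is a past-future martingale with respect to $(\mathcal{F}_{s,t})$.
   Context: A two-parameter process $(M_{s,t})_{0\le s<t<\infty}$ is a past-future martingale with respect to $(\mathcal{F}_{s,t})_{0\le s<t<\infty}$ if: (1) $\mathbb{E}[|M_{s,t}|]<\infty$ for all $s<t$; (2) $M_{s,t}$ is $\mathcal{F}_{s,t}$-measurable for all $s<t$; (3) for all $r<s<t<u$, $\mathbb{E}[M_{s,t}\mid\mathcal{F}_{r,u}]=M_{r,u}$. The stochastic integrals are Wiener integrals. *)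

theory Defs
  imports "HOL-Probability.Probability"
begin

definition standard_BM :: "'a measure \<Rightarrow> (real \<Rightarrow> 'a \<Rightarrow> real) \<Rightarrow> bool" where
  "standard_BM P B \<longleftrightarrow>
     prob_space P \<and>
     (\<forall>t. B t \<in> borel_measurable P) \<and>
     (AE \<omega> in P. B 0 \<omega> = 0) \<and>
     (AE \<omega> in P. continuous_on {0..} (\<lambda>t. B t \<omega>)) \<and>
     (\<forall>s t. 0 \<le> s \<and> s < t \<longrightarrow>
        distributed P lborel (\<lambda>\<omega>. B t \<omega> - B s \<omega>)
          (\<lambda>x. ennreal (normal_density 0 (sqrt (t - s)) x))) \<and>
     (\<forall>(n::nat) (\<tau>::nat \<Rightarrow> real). 0 \<le> \<tau> 0 \<and> (\<forall>i<n. \<tau> i < \<tau> (Suc i)) \<longrightarrow>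
        prob_space.indep_vars P (\<lambda>_. borel) (\<lambda>i \<omega>. B (\<tau> (Suc i)) \<omega> - B (\<tau> i) \<omega>) {..<n})"

definition gen_sigma :: "'a measure \<Rightarrow> (real \<Rightarrow> 'a \<Rightarrow> real) \<Rightarrow> real set \<Rightarrow> 'a measure" where
  "gen_sigma P B S = sigma (space P) {B u -` A \<inter> space P | u A. u \<in> S \<and> A \<in> sets borel}"

definition pf_filtration :: "'a measure \<Rightarrow> (real \<Rightarrow> 'a \<Rightarrow> real) \<Rightarrow> real \<Rightarrow> real \<Rightarrow> 'a measure" where
  "pf_filtration P B s t = gen_sigma P B ({0..s} \<union> {t..})"

definition past_future_martingale ::
  "'a measure \<Rightarrow> (real \<Rightarrow> real \<Rightarrow> 'a measure) \<Rightarrow> (real \<Rightarrow> real \<Rightarrow> 'a \<Rightarrow> real) \<Rightarrow> bool" where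
  "past_future_martingale P F X \<longleftrightarrow>
     (\<forall>s t. 0 \<le> s \<and> s < t \<longrightarrow> integrable P (X s t)) \<and>
     (\<forall>s t. 0 \<le> s \<and> s < t \<longrightarrow> X s t \<in> borel_measurable (F s t)) \<and>
     (\<forall>r s t u. 0 \<le> r \<and> r < s \<and> s < t \<and> t < u \<longrightarrow>
        (AE \<omega> in P. real_cond_exp P (F r u) (X s t) \<omega> = X r u \<omega>))"

definition step_fun :: "(real \<times> real \<times> real) list \<Rightarrow> real \<Rightarrow> real" where
  "step_fun cs u = (\<Sum>(c, a, b)\<leftarrow>cs. c * indicator {a..<b} u)"

definition step_integral :: "(real \<Rightarrow> 'a \<Rightarrow> real) \<Rightarrow> (real \<times> real \<times> real) list \<Rightarrow> 'a \<Rightarrow> real" where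
  "step_integral B cs \<omega> = (\<Sum>(c, a, b)\<leftarrow>cs. c * (B b \<omega> - B a \<omega>))"

text \<open>X is (a version, measurable w.r.t. sigma(B_u, u in S), of) the Wiener integral of f over S:
  the L2(P)-limit of integrals of step functions supported in S converging to f in L2(S).\<close>
definition wiener_integral ::
  "'a measure \<Rightarrow> (real \<Rightarrow> 'a \<Rightarrow> real) \<Rightarrow> (real \<Rightarrow> real) \<Rightarrow> real set \<Rightarrow> ('a \<Rightarrow> real) \<Rightarrow> bool" where
  "wiener_integral P B f S X \<longleftrightarrow>
     X \<in> borel_measurable (gen_sigma P B S) \<and>
     (\<forall>\<epsilon>>0. \<exists>cs. (\<forall>(c, a, b)\<in>set cs. a \<le> b \<and> {a..b} \<subseteq> S) \<and>
        (\<integral>\<^sup>+ u\<in>S. ennreal ((f u - step_fun cs u)\<^sup>2) \<partial>lborel) < ennreal \<epsilon> \<and>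
        (\<integral>\<^sup>+ \<omega>. ennreal ((X \<omega> - step_integral B cs \<omega>)\<^sup>2) \<partial>P) < ennreal \<epsilon>)"

definition L1L2_pos :: "(real \<Rightarrow> real) \<Rightarrow> bool" where
  "L1L2_pos f \<longleftrightarrow> set_integrable lborel {0..} f \<and> set_integrable lborel {0..} (\<lambda>u. (f u)\<^sup>2)"

end

theory Submission
  imports Defs
begin

text \<open>Fix \<open>r < u\<close> and let \<open>F\<close> be \<open>pf_filtration P B r u\<close>. For \<open>r < v < u\<close> the pair of
  increments \<open>B v - B r\<close>, \<open>B u - B v\<close> is independent of the increments of \<open>B\<close> outside
  \<open>[r, u]\<close>, and for independent centred Gaussians \<open>X\<close>, \<open>R\<close> of variances \<open>a\<close>, \<open>b\<close> one has
  \<open>E[X | X + R] = a / (a + b) (X + R)\<close>. Checking this on an \<open>\<inter>\<close>-stable generator of \<open>F\<close> and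
  extending by Dynkin's argument gives the Brownian bridge formula
  \<open>E[B v - B r | F] = (v - r) / (u - r) (B u - B r)\<close>.
  By linearity, conditioning a stochastic integral of a step function keeps its part outside \<open>[r, u)\<close>
  and replaces the part inside by its mean slope times \<open>B u - B r\<close>. The Ito isometry and the
  \<open>L\<^sup>1\<close>-contractivity of conditional expectation carry this over to Wiener integrals, and applied to
  the three terms of \<open>M s t\<close> the deterministic corrections telescope to those of \<open>M r u\<close>.\<close>

section \<open>Conditioning a Gaussian on a sum\<close>

lemma normal_density_mult_normal_density:
  fixes a b x z :: real
  assumes a: "0 < a" and b: "0 < b"
  shows "normal_density 0 (sqrt b) (z - x) * normal_density 0 (sqrt a) x =
         normal_density 0 (sqrt (a + b)) z * normal_density (z * a / (a + b)) (sqrt (a * b / (a + b))) x"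
proof -
  have ab: "0 < a + b" using a b by simp
  have norm: "1 / sqrt (2 * pi * b) * (1 / sqrt (2 * pi * a)) =
              1 / sqrt (2 * pi * (a + b)) * (1 / sqrt (2 * pi * (a * b / (a + b))))"
  proof -
    have "sqrt (2 * pi * b) * sqrt (2 * pi * a) = sqrt (2 * pi * (a + b)) * sqrt (2 * pi * (a * b / (a + b)))"
      unfolding real_sqrt_mult[symmetric] using ab by (intro arg_cong[where f=sqrt]) (simp add: field_simps)
    then show ?thesis by (simp add: field_simps)
  qed
  have "(x - z * a / (a + b))\<^sup>2 / (2 * (a * b / (a + b))) = (x * (a + b) - z * a)\<^sup>2 / (2 * a * b * (a + b))"
  proof -
    have "x - z * a / (a + b) = (x * (a + b) - z * a) / (a + b)" using ab by (simp add: field_simps)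
    then show ?thesis using a b ab by (simp add: power_divide power2_eq_square)
  qed
  moreover have "- (z - x)\<^sup>2 / (2 * b) + - x\<^sup>2 / (2 * a) + z\<^sup>2 / (2 * (a + b))
      + (x * (a + b) - z * a)\<^sup>2 / (2 * a * b * (a + b)) = 0"
    using a b ab by (simp add: divide_simps) (simp add: power2_eq_square algebra_simps)
  ultimately have expo: "- (z - x)\<^sup>2 / (2 * b) + - x\<^sup>2 / (2 * a) =
      - z\<^sup>2 / (2 * (a + b)) + - (x - z * a / (a + b))\<^sup>2 / (2 * (a * b / (a + b)))"
    by linarith
  have "normal_density 0 (sqrt b) (z - x) * normal_density 0 (sqrt a) x =
        (1 / sqrt (2 * pi * b) * (1 / sqrt (2 * pi * a))) * (exp (- (z - x)\<^sup>2 / (2 * b)) * exp (- x\<^sup>2 / (2 * a)))"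
    using a b by (simp add: normal_density_def)
  also have "\<dots> = (1 / sqrt (2 * pi * b) * (1 / sqrt (2 * pi * a))) * exp (- (z - x)\<^sup>2 / (2 * b) + - x\<^sup>2 / (2 * a))"
    by (simp only: exp_add)
  also have "\<dots> = (1 / sqrt (2 * pi * (a + b)) * (1 / sqrt (2 * pi * (a * b / (a + b))))) *
      exp (- z\<^sup>2 / (2 * (a + b)) + - (x - z * a / (a + b))\<^sup>2 / (2 * (a * b / (a + b))))"
    by (simp only: norm expo)
  also have "\<dots> = (1 / sqrt (2 * pi * (a + b)) * (1 / sqrt (2 * pi * (a * b / (a + b))))) *
      (exp (- z\<^sup>2 / (2 * (a + b))) * exp (- (x - z * a / (a + b))\<^sup>2 / (2 * (a * b / (a + b)))))"
    by (simp only: exp_add)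
  also have "\<dots> = normal_density 0 (sqrt (a + b)) z * normal_density (z * a / (a + b)) (sqrt (a * b / (a + b))) x"
    using a b ab by (simp add: normal_density_def)
  finally show ?thesis .
qed

lemma integral_normal_density_conv_first_moment:
  fixes a b z :: real
  assumes a: "0 < a" and b: "0 < b"
  shows "(\<integral>x. normal_density 0 (sqrt b) (z - x) * normal_density 0 (sqrt a) x * x \<partial>lborel) =
         a / (a + b) * z * normal_density 0 (sqrt (a + b)) z"
proof -
  have "(\<integral>x. normal_density 0 (sqrt b) (z - x) * normal_density 0 (sqrt a) x * x \<partial>lborel) =
        normal_density 0 (sqrt (a + b)) z *
          (\<integral>x. normal_density (z * a / (a + b)) (sqrt (a * b / (a + b))) x * x \<partial>lborel)"
    by (simp add: normal_density_mult_normal_density[OF a b] mult.assoc)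
  also have "(\<integral>x. normal_density (z * a / (a + b)) (sqrt (a * b / (a + b))) x * x \<partial>lborel) = z * a / (a + b)"
    using integral_normal_moment_nz_1[of "sqrt (a * b / (a + b))" "z * a / (a + b)"] a b by simp
  finally show ?thesis by simp
qed

lemma distr_density_shear:
  fixes f :: "real \<times> real \<Rightarrow> ennreal"
  assumes [measurable]: "f \<in> borel_measurable (lborel \<Otimes>\<^sub>M lborel)"
  shows "distr (density (lborel \<Otimes>\<^sub>M lborel) f) (lborel \<Otimes>\<^sub>M lborel) (\<lambda>(x, y). (x + y, x)) =
         density (lborel \<Otimes>\<^sub>M lborel) (\<lambda>(z, x). f (x, z - x))"
    (is "distr ?D ?L ?T = density ?L ?g")
proof (rule measure_eqI)
  fix A assume "A \<in> sets (distr ?D ?L ?T)"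
  then have A[measurable]: "A \<in> sets (borel \<Otimes>\<^sub>M borel)" by simp
  have T: "?T \<in> measurable ?L ?L" by measurable
  have "emeasure (distr ?D ?L ?T) A = emeasure ?D (?T -` A \<inter> space ?L)"
    by (subst emeasure_distr) auto
  also have "\<dots> = (\<integral>\<^sup>+p. f p * indicator A (?T p) \<partial>?L)"
    using emeasure_density[OF assms measurable_sets[OF T]] A
    by (auto intro!: nn_integral_cong simp: indicator_def space_pair_measure)
  also have "\<dots> = (\<integral>\<^sup>+x. \<integral>\<^sup>+y. f (x, y) * indicator A (x + y, x) \<partial>lborel \<partial>lborel)"
    by (subst lborel.nn_integral_fst[symmetric]) (auto simp: split_beta')
  also have "\<dots> = (\<integral>\<^sup>+x. \<integral>\<^sup>+z. ?g (z, x) * indicator A (z, x) \<partial>lborel \<partial>lborel)"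
  proof (rule nn_integral_cong)
    fix x :: real
    show "(\<integral>\<^sup>+y. f (x, y) * indicator A (x + y, x) \<partial>lborel) = (\<integral>\<^sup>+z. ?g (z, x) * indicator A (z, x) \<partial>lborel)"
      using nn_integral_real_affine[of "\<lambda>z. ?g (z, x) * indicator A (z, x)" 1 x] by simp
  qed
  also have "\<dots> = (\<integral>\<^sup>+p. ?g p * indicator A p \<partial>?L)"
    by (rule lborel_pair.nn_integral_snd) measurable
  also have "\<dots> = emeasure (density ?L ?g) A"
    by (simp add: emeasure_density split_beta')
  finally show "emeasure (distr ?D ?L ?T) A = emeasure (density ?L ?g) A" .
qed simp

lemma (in prob_space) distributed_indep_normal_sum_pair:
  assumes a: "0 < a" and b: "0 < b"
    and X: "distributed M lborel X (\<lambda>x. ennreal (normal_density 0 (sqrt a) x))"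
    and R: "distributed M lborel R (\<lambda>x. ennreal (normal_density 0 (sqrt b) x))"
    and ind: "indep_var borel X borel R"
  shows "distributed M (lborel \<Otimes>\<^sub>M lborel) (\<lambda>\<omega>. (X \<omega> + R \<omega>, X \<omega>))
           (\<lambda>(z, x). ennreal (normal_density 0 (sqrt b) (z - x) * normal_density 0 (sqrt a) x))"
proof -
  have [measurable]: "X \<in> borel_measurable M" "R \<in> borel_measurable M"
    using distributed_measurable[OF X] distributed_measurable[OF R] by auto
  have "indep_var lborel X lborel R"
    using ind unfolding indep_var_def indep_vars_def2 by (simp add: case_bool_if if_distrib)
  then have "distributed M (lborel \<Otimes>\<^sub>M lborel) (\<lambda>\<omega>. (X \<omega>, R \<omega>))
      (\<lambda>(x, y). ennreal (normal_density 0 (sqrt a) x) * ennreal (normal_density 0 (sqrt b) y))"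
    by (rule distributed_joint_indep[OF lborel.sigma_finite_measure_axioms lborel.sigma_finite_measure_axioms X R])
  then have joint: "distr M (lborel \<Otimes>\<^sub>M lborel) (\<lambda>\<omega>. (X \<omega>, R \<omega>)) = density (lborel \<Otimes>\<^sub>M lborel)
      (\<lambda>(x, y). ennreal (normal_density 0 (sqrt a) x) * ennreal (normal_density 0 (sqrt b) y))"
    by (rule distributed_distr_eq_density)
  have "distr M (lborel \<Otimes>\<^sub>M lborel) (\<lambda>\<omega>. (X \<omega> + R \<omega>, X \<omega>)) =
        distr (distr M (lborel \<Otimes>\<^sub>M lborel) (\<lambda>\<omega>. (X \<omega>, R \<omega>))) (lborel \<Otimes>\<^sub>M lborel) (\<lambda>(x, y). (x + y, x))"
    by (subst distr_distr) (auto simp: comp_def)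
  also have "\<dots> = density (lborel \<Otimes>\<^sub>M lborel)
      (\<lambda>(z, x). ennreal (normal_density 0 (sqrt b) (z - x) * normal_density 0 (sqrt a) x))"
    unfolding joint by (subst distr_density_shear) (auto simp: ennreal_mult' mult.commute split_beta')
  finally show ?thesis
    unfolding distributed_def by (auto simp: split_beta')
qed

lemma (in prob_space) indep_normal_first_moment_given_sum:
  assumes a: "0 < a" and b: "0 < b"
    and X: "distributed M lborel X (\<lambda>x. ennreal (normal_density 0 (sqrt a) x))"
    and R: "distributed M lborel R (\<lambda>x. ennreal (normal_density 0 (sqrt b) x))"
    and ind: "indep_var borel X borel R"
    and [measurable]: "E \<in> sets borel"
  shows "expectation (\<lambda>\<omega>. X \<omega> * indicator E (X \<omega> + R \<omega>)) =
         a / (a + b) * expectation (\<lambda>\<omega>. (X \<omega> + R \<omega>) * indicator E (X \<omega> + R \<omega>))"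
proof -
  have [measurable]: "X \<in> borel_measurable M" "R \<in> borel_measurable M"
    using distributed_measurable[OF X] distributed_measurable[OF R] by auto
  define g where "g = (\<lambda>(z, x). normal_density 0 (sqrt b) (z - x) * normal_density 0 (sqrt a) x)"
  define h where "h = (\<lambda>(z, x). x * indicator E z :: real)"
  have [measurable]: "g \<in> borel_measurable (lborel \<Otimes>\<^sub>M lborel)" "h \<in> borel_measurable (lborel \<Otimes>\<^sub>M lborel)"
    unfolding g_def h_def by measurable
  have g_nonneg: "0 \<le> g p" for p by (simp add: g_def split_beta')
  have joint: "distributed M (lborel \<Otimes>\<^sub>M lborel) (\<lambda>\<omega>. (X \<omega> + R \<omega>, X \<omega>)) (\<lambda>p. ennreal (g p))"
    using distributed_indep_normal_sum_pair[OF a b X R ind] by (simp add: g_def split_beta')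
  have "integrable M X"
    by (rule distributed_integrable_var[OF X]) (use a in \<open>auto intro!: integrable_normal_moment_nz_1\<close>)
  then have "integrable M (\<lambda>\<omega>. X \<omega> * indicator E (X \<omega> + R \<omega>))"
    by (rule Bochner_Integration.integrable_bound) (auto simp: indicator_def)
  then have gh: "integrable (lborel \<Otimes>\<^sub>M lborel) (\<lambda>p. g p * h p)"
    using distributed_integrable[OF joint, of h] g_nonneg by (simp add: h_def)
  have "expectation (\<lambda>\<omega>. X \<omega> * indicator E (X \<omega> + R \<omega>)) = (\<integral>p. g p * h p \<partial>(lborel \<Otimes>\<^sub>M lborel))"
    using distributed_integral[OF joint, of h] g_nonneg by (simp add: h_def)
  also have "\<dots> = (\<integral>z. \<integral>x. g (z, x) * h (z, x) \<partial>lborel \<partial>lborel)"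
    by (rule lborel_pair.integral_fst'[OF gh, symmetric])
  also have "\<dots> = (\<integral>z. a / (a + b) * (normal_density 0 (sqrt (a + b)) z * (z * indicator E z)) \<partial>lborel)"
  proof (rule Bochner_Integration.integral_cong[OF refl])
    fix z :: real
    have "(\<integral>x. g (z, x) * h (z, x) \<partial>lborel) =
        (\<integral>x. indicator E z * (normal_density 0 (sqrt b) (z - x) * normal_density 0 (sqrt a) x * x) \<partial>lborel)"
      by (simp add: g_def h_def mult_ac)
    then show "(\<integral>x. g (z, x) * h (z, x) \<partial>lborel) = a / (a + b) * (normal_density 0 (sqrt (a + b)) z * (z * indicator E z))"
      by (simp add: integral_normal_density_conv_first_moment[OF a b])
  qed
  also have "\<dots> = a / (a + b) * expectation (\<lambda>\<omega>. (X \<omega> + R \<omega>) * indicator E (X \<omega> + R \<omega>))"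
  proof -
    have "distributed M lborel (\<lambda>\<omega>. X \<omega> + R \<omega>) (\<lambda>x. ennreal (normal_density (0 + 0) (sqrt ((sqrt a)\<^sup>2 + (sqrt b)\<^sup>2)) x))"
      by (rule add_indep_normal[OF ind]) (use a b X R in auto)
    then have "distributed M lborel (\<lambda>\<omega>. X \<omega> + R \<omega>) (\<lambda>x. ennreal (normal_density 0 (sqrt (a + b)) x))"
      using a b by simp
    from distributed_integral[OF this, of "\<lambda>z. z * indicator E z"] show ?thesis by simp
  qed
  finally show ?thesis .
qed

lemma finite_strict_mono_enumeration:
  fixes T :: "'a::linorder set"
  assumes "finite T" "T \<noteq> {}"
  obtains n :: nat and \<tau> where "strict_mono_on {..n} \<tau>" "\<tau> ` {..n} = T"
proof -
  define xs where "xs = sorted_list_of_set T"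
  have sorted: "sorted_wrt (<) xs" and set_xs: "set xs = T"
    using assms by (simp_all add: xs_def)
  obtain m where "length xs = Suc m" using assms set_xs by (cases xs) auto
  then have idx: "{..m} = {..<length xs}" by (simp add: lessThan_Suc_atMost)
  have "strict_mono_on {..m} ((!) xs)"
    unfolding idx by (auto intro!: strict_mono_onI sorted_wrt_nth_less[OF sorted])
  moreover have "(!) xs ` {..m} = T"
    unfolding idx set_xs[symmetric] by (auto simp: in_set_conv_nth)
  ultimately show ?thesis by (rule that)
qed

lemma strict_mono_on_enumeration_consecutive:
  fixes \<tau> :: "nat \<Rightarrow> 'a::linorder"
  assumes mono: "strict_mono_on {..n} \<tau>" and T: "\<tau> ` {..n} = T"
    and "x \<in> T" "y \<in> T" "x < y" and gap: "\<And>z. z \<in> T \<Longrightarrow> z \<le> x \<or> y \<le> z"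
  obtains i where "Suc i \<le> n" "\<tau> i = x" "\<tau> (Suc i) = y"
proof -
  obtain i j where i: "i \<le> n" "\<tau> i = x" and j: "j \<le> n" "\<tau> j = y"
    using \<open>x \<in> T\<close> \<open>y \<in> T\<close> T by auto
  have "i < j" using strict_mono_on_less[OF mono] i j \<open>x < y\<close> by auto
  moreover have "\<not> Suc i < j"
  proof
    assume "Suc i < j"
    then have "x < \<tau> (Suc i)" "\<tau> (Suc i) < y" "\<tau> (Suc i) \<in> T"
      using strict_mono_on_less[OF mono] i j T by auto
    then show False using gap by force
  qed
  ultimately have "j = Suc i" by simp
  with i j show ?thesis by (intro that) auto
qed

lemma enumeration_with_adjacent_points:
  fixes r v u :: real
  assumes "0 \<le> r" "r < v" "v < u" "finite W" "W \<subseteq> {0..r} \<union> {u..}"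
  obtains n :: nat and \<tau> i where "strict_mono_on {..n} \<tau>" "\<tau> 0 = 0" "W \<subseteq> \<tau> ` {..n}"
    "Suc (Suc i) \<le> n" "\<tau> i = r" "\<tau> (Suc i) = v" "\<tau> (Suc (Suc i)) = u"
proof -
  define T where "T = W \<union> {0, r, v, u}"
  have "finite T" "T \<noteq> {}" using assms(4) by (auto simp: T_def)
  then obtain n :: nat and \<tau> where mono: "strict_mono_on {..n} \<tau>" and T: "\<tau> ` {..n} = T"
    by (rule finite_strict_mono_enumeration)
  have in_T: "0 \<in> T" "r \<in> T" "v \<in> T" "u \<in> T" "W \<subseteq> T" by (auto simp: T_def)
  have T_cases: "0 \<le> z \<and> (z \<le> r \<or> z = v \<or> u \<le> z)" if "z \<in> T" for z
    using that assms(1,2,3,5) by (auto simp: T_def)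
  have "z \<le> r \<or> v \<le> z" "z \<le> v \<or> u \<le> z" if "z \<in> T" for z
    using T_cases[OF that] assms(2,3) by auto
  then obtain i i' where i: "Suc i \<le> n" "\<tau> i = r" "\<tau> (Suc i) = v"
    and i': "Suc i' \<le> n" "\<tau> i' = v" "\<tau> (Suc i') = u"
    using strict_mono_on_enumeration_consecutive[OF mono T in_T(2,3) assms(2)]
      strict_mono_on_enumeration_consecutive[OF mono T in_T(3,4) assms(3)] by metis
  have "i' = Suc i" using strict_mono_on_eqD[OF mono, of "Suc i" i'] i i' by simp
  moreover have "\<tau> 0 = 0"
  proof -
    obtain j where "j \<le> n" "\<tau> j = 0" using T in_T(1) by (metis imageE atMost_iff)
    then have "\<tau> 0 \<le> 0" using strict_mono_on_leD[OF mono, of 0 j] by simp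
    moreover have "0 \<le> \<tau> 0" using T_cases T by auto
    ultimately show ?thesis by simp
  qed
  ultimately show ?thesis using that[OF mono] i i' T in_T(5) by simp
qed

lemma (in prob_space) indep_vars_imp_indep_var:
  assumes "indep_vars (\<lambda>_. M') X I" "i \<in> I" "j \<in> I" "i \<noteq> j"
  shows "indep_var M' (X i) M' (X j)"
proof -
  have "indep_var M' ((\<lambda>f. f i) \<circ> (\<lambda>\<omega>. restrict (\<lambda>k. X k \<omega>) {i}))
                  M' ((\<lambda>f. f j) \<circ> (\<lambda>\<omega>. restrict (\<lambda>k. X k \<omega>) {j}))"
    using assms by (intro indep_var_compose[OF indep_var_restrict[OF assms(1)]]) auto
  then show ?thesis by (simp add: comp_def)
qed

lemma set_integral_eq_0_sigma_sets:
  fixes f :: "'a \<Rightarrow> real"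
  assumes G: "Int_stable G" "G \<subseteq> sets M" and f: "integrable M f" "integral\<^sup>L M f = 0"
    and zero: "\<And>A. A \<in> G \<Longrightarrow> (LINT x:A|M. f x) = 0"
    and A: "A \<in> sigma_sets (space M) G"
  shows "(LINT x:A|M. f x) = 0"
proof -
  have "G \<subseteq> Pow (space M)" using G(2) sets.sets_into_space by auto
  from G(1) this A show ?thesis
proof (induction rule: sigma_sets_induct_disjoint)
  case (basic A)
  then show ?case by (rule zero)
next
  case empty
  then show ?case by (simp add: set_lebesgue_integral_def)
next
  case (compl A)
  have "A \<in> sets M" using compl.hyps G(2) sets.sigma_sets_subset by blast
  have "(LINT x:(space M - A)|M. f x) = (\<integral>x. f x - indicator A x * f x \<partial>M)"
    unfolding set_lebesgue_integral_def by (intro Bochner_Integration.integral_cong) (auto simp: indicator_def)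
  also have "\<dots> = integral\<^sup>L M f - (LINT x:A|M. f x)"
    using f(1) integrable_mult_indicator[OF \<open>A \<in> sets M\<close> f(1)] by (simp add: set_lebesgue_integral_def)
  finally show ?case using compl.IH f(2) by simp
next
  case (union A)
  have A: "A i \<in> sets M" for i using union.hyps G(2) sets.sigma_sets_subset by blast
  have "(LINT x:(\<Union>i. A i)|M. f x) = (\<Sum>i. (LINT x:(A i)|M. f x))"
  proof (rule lebesgue_integral_countable_add)
    show "set_integrable M (\<Union>i. A i) f"
      unfolding set_integrable_def using A by (intro integrable_mult_indicator f(1)) auto
  qed (use A union.hyps(1) in \<open>auto simp: disjoint_family_on_def\<close>)
  then show ?case using union.IH by simp
qed
qed

lemma (in sigma_finite_subalgebra) integral_abs_real_cond_exp_le: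
  assumes f: "integrable M f"
  shows "(\<integral>x. \<bar>real_cond_exp M F f x\<bar> \<partial>M) \<le> (\<integral>x. \<bar>f x\<bar> \<partial>M)"
proof -
  have [measurable]: "f \<in> borel_measurable M" and fa: "integrable M (\<lambda>x. \<bar>f x\<bar>)" using f by auto
  have "AE x in M. 0 \<le> real_cond_exp M F (\<lambda>x. \<bar>f x\<bar> - f x) x"
       "AE x in M. 0 \<le> real_cond_exp M F (\<lambda>x. \<bar>f x\<bar> + f x) x"
    by (auto intro!: real_cond_exp_pos)
  moreover have "AE x in M. real_cond_exp M F (\<lambda>x. \<bar>f x\<bar> - f x) x = real_cond_exp M F (\<lambda>x. \<bar>f x\<bar>) x - real_cond_exp M F f x"
    by (rule real_cond_exp_diff[OF fa f])
  moreover have "AE x in M. real_cond_exp M F (\<lambda>x. \<bar>f x\<bar> + f x) x = real_cond_exp M F (\<lambda>x. \<bar>f x\<bar>) x + real_cond_exp M F f x"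
    by (rule real_cond_exp_add[OF fa f])
  ultimately have "AE x in M. \<bar>real_cond_exp M F f x\<bar> \<le> real_cond_exp M F (\<lambda>x. \<bar>f x\<bar>) x"
    by eventually_elim auto
  then have "(\<integral>x. \<bar>real_cond_exp M F f x\<bar> \<partial>M) \<le> (\<integral>x. real_cond_exp M F (\<lambda>x. \<bar>f x\<bar>) x \<partial>M)"
    by (rule integral_mono_AE[OF integrable_abs[OF real_cond_exp_int(1)[OF f]] real_cond_exp_int(1)[OF fa]])
  also have "\<dots> = (\<integral>x. \<bar>f x\<bar> \<partial>M)" by (rule real_cond_exp_int(2)[OF fa])
  finally show ?thesis .
qed

lemma abs_le_square_div_add:
  fixes y \<eta> :: real
  assumes "0 < \<eta>"
  shows "\<bar>y\<bar> \<le> y\<^sup>2 / \<eta> + \<eta>"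
proof -
  have "0 \<le> (\<bar>y\<bar> - \<eta>)\<^sup>2 + \<eta> * \<bar>y\<bar>" using assms by simp
  then have "\<eta> * \<bar>y\<bar> \<le> y\<^sup>2 + \<eta>\<^sup>2"
    by (simp add: power2_eq_square algebra_simps)
  then show ?thesis using assms by (simp add: field_simps power2_eq_square)
qed

lemma (in prob_space) integrable_expectation_abs_le_square:
  fixes Y :: "'a \<Rightarrow> real"
  assumes [measurable]: "Y \<in> borel_measurable M" and Y2: "integrable M (\<lambda>x. (Y x)\<^sup>2)" and \<eta>: "0 < \<eta>"
  shows "integrable M Y" "expectation (\<lambda>x. \<bar>Y x\<bar>) \<le> expectation (\<lambda>x. (Y x)\<^sup>2) / \<eta> + \<eta>"
proof -
  have bound: "integrable M (\<lambda>x. (Y x)\<^sup>2 / \<eta> + \<eta>)" using Y2 by auto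
  show Y: "integrable M Y"
    by (rule Bochner_Integration.integrable_bound[OF bound]) (use abs_le_square_div_add[OF \<eta>] \<eta> in auto)
  have "expectation (\<lambda>x. \<bar>Y x\<bar>) \<le> expectation (\<lambda>x. (Y x)\<^sup>2 / \<eta> + \<eta>)"
    by (rule integral_mono) (use Y bound abs_le_square_div_add[OF \<eta>] in auto)
  also have "\<dots> = expectation (\<lambda>x. (Y x)\<^sup>2) / \<eta> + \<eta>"
    using Y2 prob_space by simp
  finally show "expectation (\<lambda>x. \<bar>Y x\<bar>) \<le> expectation (\<lambda>x. (Y x)\<^sup>2) / \<eta> + \<eta>" .
qed

lemma (in prob_space) expectation_abs_le_of_square_le:
  fixes Y :: "'a \<Rightarrow> real"
  assumes "Y \<in> borel_measurable M" "integrable M (\<lambda>x. (Y x)\<^sup>2)" "expectation (\<lambda>x. (Y x)\<^sup>2) \<le> k * \<eta>\<^sup>2" "0 < \<eta>"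
  shows "expectation (\<lambda>x. \<bar>Y x\<bar>) \<le> (k + 1) * \<eta>"
proof -
  have "expectation (\<lambda>x. \<bar>Y x\<bar>) \<le> expectation (\<lambda>x. (Y x)\<^sup>2) / \<eta> + \<eta>"
    by (rule integrable_expectation_abs_le_square(2)[OF assms(1,2,4)])
  also have "\<dots> \<le> k * \<eta>\<^sup>2 / \<eta> + \<eta>" using assms(3,4) by (simp add: divide_right_mono)
  also have "\<dots> = (k + 1) * \<eta>" using assms(4) by (simp add: power2_eq_square field_simps)
  finally show ?thesis .
qed

lemma nn_integral_less_imp_integral_less:
  fixes f :: "'a \<Rightarrow> real"
  assumes [measurable]: "f \<in> borel_measurable M" and nonneg: "\<And>x. 0 \<le> f x"
    and less: "(\<integral>\<^sup>+x. ennreal (f x) \<partial>M) < ennreal e"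
  shows "integrable M f" "integral\<^sup>L M f < e"
proof -
  show f: "integrable M f"
    by (rule integrableI_nonneg) (use nonneg less in \<open>auto intro: less_le_trans[OF _ top_greatest]\<close>)
  have "ennreal (integral\<^sup>L M f) < ennreal e"
    using less nn_integral_eq_integral[OF f] nonneg by simp
  then show "integral\<^sup>L M f < e"
    using ennreal_less_iff[of "integral\<^sup>L M f" e] nonneg by (auto intro: Bochner_Integration.integral_nonneg)
qed

lemma integrable_indicator_Ico [simp]:
  "integrable lborel (\<lambda>x. indicator {a..<b} x :: real)" for a b :: real
  by (cases "a \<le> b") (simp_all add: integrable_indicator_iff)

lemma integrable_indicator_Ico_mult [simp]:
  "integrable lborel (\<lambda>x. indicator {a..<b} x * indicator {c..<d} x :: real)" for a b c d :: real
proof -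
  have "(\<lambda>x. indicator {a..<b} x * indicator {c..<d} x :: real) = indicator {max a c..<min b d}"
    by (auto simp: fun_eq_iff indicator_def)
  then show ?thesis by simp
qed

lemma integral_indicator_Ico_mult:
  fixes a b c d :: real
  shows "(LINT x|lborel. indicator {a..<b} x * indicator {c..<d} x :: real) = max 0 (min b d - max a c)"
proof -
  have "(\<lambda>x. indicator {a..<b} x * indicator {c..<d} x :: real) = indicator {max a c..<min b d}"
    by (auto simp: fun_eq_iff indicator_def)
  then show ?thesis
    using measure_lborel_Ico[of "max a c" "min b d"] by (cases "max a c \<le> min b d") auto
qed

lemma list_of_triples_induct [case_names Nil Cons]:
  "P [] \<Longrightarrow> (\<And>c a b cs. P cs \<Longrightarrow> P ((c, a, b) # cs)) \<Longrightarrow> P cs"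
  by (induction cs) auto

lemma step_fun_Nil [simp]: "step_fun [] x = 0"
  by (simp add: step_fun_def)

lemma step_fun_Cons [simp]: "step_fun ((c, a, b) # cs) x = c * indicator {a..<b} x + step_fun cs x"
  by (simp add: step_fun_def)

lemma step_fun_append: "step_fun (cs1 @ cs2) x = step_fun cs1 x + step_fun cs2 x"
  by (simp add: step_fun_def)

lemma borel_measurable_step_fun [measurable]: "step_fun cs \<in> borel_measurable borel"
  by (induction cs) (auto simp: step_fun_def)

lemma integrable_indicator_Ico_mult_step_fun [simp]:
  "integrable lborel (\<lambda>x. indicator {a..<b} x * step_fun cs x)"
proof (induction cs rule: list_of_triples_induct)
  case (Cons c a' b' cs)
  then have "integrable lborel (\<lambda>x. c * (indicator {a..<b} x * indicator {a'..<b'} x) + indicator {a..<b} x * step_fun cs x)"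
    using Cons.IH by simp
  then show ?case by (simp add: algebra_simps)
qed simp

lemma integrable_step_fun_mult [simp]: "integrable lborel (\<lambda>x. step_fun cs1 x * step_fun cs2 x)"
proof (induction cs1 rule: list_of_triples_induct)
  case (Cons c a b cs)
  have "integrable lborel (\<lambda>x. c * (indicator {a..<b} x * step_fun cs2 x) + step_fun cs x * step_fun cs2 x)"
    using Cons.IH by simp
  then show ?case by (simp add: algebra_simps)
qed simp

lemma integrable_step_fun_diff_square [simp]:
  "integrable lborel (\<lambda>x. (step_fun cs1 x - step_fun cs2 x)\<^sup>2)"
proof -
  have "(step_fun cs1 x - step_fun cs2 x)\<^sup>2 =
      step_fun cs1 x * step_fun cs1 x - 2 * (step_fun cs1 x * step_fun cs2 x) + step_fun cs2 x * step_fun cs2 x" for x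
    by (simp add: power2_eq_square algebra_simps)
  then show ?thesis by simp
qed

lemma step_fun_eq_0_outside:
  assumes "\<forall>(c, a, b)\<in>set cs. {a..b} \<subseteq> T" "x \<notin> T"
  shows "step_fun cs x = 0"
  using assms by (induction cs rule: list_of_triples_induct) (auto simp: indicator_def subset_iff)

lemma step_fun_eq_0_in_gap:
  assumes cs: "\<forall>(c, a, b)\<in>set cs. {a..b} \<subseteq> S" and gap: "S \<inter> {r<..<u} = {}" and x: "r \<le> x" "x < u"
  shows "step_fun cs x = 0"
  using cs
proof (induction cs rule: list_of_triples_induct)
  case (Cons c a b cs)
  have "x \<notin> {a..<b}"
  proof
    assume "x \<in> {a..<b}"
    then have "(x + min b u) / 2 \<in> {a..b}" "(x + min b u) / 2 \<in> {r<..<u}" using x by auto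
    moreover have "{a..b} \<subseteq> S" using Cons.prems by auto
    ultimately show False using gap by blast
  qed
  then show ?case using Cons by auto
qed simp

definition nonneg_intervals :: "(real \<times> real \<times> real) list \<Rightarrow> bool" where
  "nonneg_intervals cs \<longleftrightarrow> (\<forall>(c, a, b)\<in>set cs. 0 \<le> a \<and> a \<le> b)"

lemma nonneg_intervals_simps [simp]:
  "nonneg_intervals []"
  "nonneg_intervals ((c, a, b) # cs) \<longleftrightarrow> 0 \<le> a \<and> a \<le> b \<and> nonneg_intervals cs"
  by (auto simp: nonneg_intervals_def)

definition outer_steps :: "real \<Rightarrow> real \<Rightarrow> (real \<times> real \<times> real) list \<Rightarrow> (real \<times> real \<times> real) list" where
  "outer_steps r u cs =
     map (\<lambda>(c, a, b). (c, min a r, min b r)) cs @ map (\<lambda>(c, a, b). (c, max a u, max b u)) cs"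

lemma nonneg_intervals_outer_steps: "0 \<le> r \<Longrightarrow> nonneg_intervals cs \<Longrightarrow> nonneg_intervals (outer_steps r u cs)"
  by (auto simp: nonneg_intervals_def outer_steps_def)

lemma step_fun_outer_steps:
  assumes "r < u"
  shows "step_fun (outer_steps r u cs) x = indicator (- {r..<u}) x * step_fun cs x"
proof (induction cs rule: list_of_triples_induct)
  case (Cons c a b cs)
  have "indicator {min a r..<min b r} x + indicator {max a u..<max b u} x =
        (indicator (- {r..<u}) x * indicator {a..<b} x :: real)"
    using assms by (auto simp: indicator_def min_def max_def)
  then show ?case
    using Cons.IH by (simp add: outer_steps_def step_fun_append) (simp add: algebra_simps flip: distrib_left)
qed (simp add: outer_steps_def)

text \<open>The weight of \<open>B u - B r\<close> in the Brownian bridge interpolation of \<open>B x\<close> between \<open>r\<close> and \<open>u\<close>.\<close>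

definition bridge_weight :: "real \<Rightarrow> real \<Rightarrow> real \<Rightarrow> real" where
  "bridge_weight r u x = (min (max x r) u - r) / (u - r)"

lemma bridge_weight_diff:
  assumes "r < u" "a \<le> b"
  shows "(bridge_weight r u b - bridge_weight r u a) * (u - r) =
         (LINT x|lborel. indicator {r..<u} x * indicator {a..<b} x)"
proof -
  have "(bridge_weight r u b - bridge_weight r u a) * (u - r) = min (max b r) u - min (max a r) u"
    using assms by (simp add: bridge_weight_def diff_divide_distrib[symmetric])
  also have "\<dots> = max 0 (min u b - max r a)" using assms by (auto simp: min_def max_def)
  finally show ?thesis by (simp add: integral_indicator_Ico_mult)
qed

lemma set_integral_diff_gap:
  fixes f :: "real \<Rightarrow> real"
  assumes SO: "SO \<in> sets borel" "SO \<subseteq> S" "SO \<inter> {r<..<u} = {}" "S - {r..<u} \<subseteq> SO"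
    and f: "set_integrable lborel S f"
  shows "(LINT x:S|lborel. f x) - (LINT x:SO|lborel. f x) = (LINT x|lborel. indicator {r..<u} x * (indicator S x * f x))"
proof -
  have S: "integrable lborel (\<lambda>x. indicator S x * f x)" using f by (simp add: set_integrable_def)
  moreover have "(\<lambda>x. indicator SO x * f x) = (\<lambda>x. indicator SO x * (indicator S x * f x))"
    using SO(2) by (auto simp: fun_eq_iff indicator_def)
  ultimately have SO_int: "integrable lborel (\<lambda>x. indicator SO x * f x)"
    using integrable_mult_indicator[of SO lborel "\<lambda>x. indicator S x * f x"] SO(1) by simp
  have ae: "AE x in lborel. indicator S x * f x - indicator SO x * f x = indicator {r..<u} x * (indicator S x * f x)"
    using AE_lborel_singleton[of r]
  proof eventually_elim
    case (elim x)
    then show ?case using SO(2-4) by (cases "x \<in> S"; cases "x \<in> {r..<u}") (auto simp: indicator_def)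
  qed
  have "(LINT x|lborel. indicator S x * f x - indicator SO x * f x) = (LINT x|lborel. indicator {r..<u} x * (indicator S x * f x))"
    using S SO_int ae by (intro integral_cong_AE) auto
  then show ?thesis using S SO_int by (simp add: set_lebesgue_integral_def)
qed

lemma integral_outer_steps_diff_square_le:
  fixes f :: "real \<Rightarrow> real"
  assumes "r < u" and cs: "\<forall>(c, a, b)\<in>set cs. {a..b} \<subseteq> S" and csO: "\<forall>(c, a, b)\<in>set csO. {a..b} \<subseteq> SO"
    and SO: "SO \<subseteq> S" "SO \<inter> {r<..<u} = {}" "S - {r..<u} \<subseteq> SO"
    and L2: "set_integrable lborel S (\<lambda>x. (f x - step_fun cs x)\<^sup>2)" "set_integrable lborel SO (\<lambda>x. (f x - step_fun csO x)\<^sup>2)"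
  shows "(LINT x|lborel. (step_fun (outer_steps r u cs) x - step_fun csO x)\<^sup>2) \<le>
    2 * (LINT x:S|lborel. (f x - step_fun cs x)\<^sup>2) + 2 * (LINT x:SO|lborel. (f x - step_fun csO x)\<^sup>2)"
proof -
  have bound: "(step_fun (outer_steps r u cs) x - step_fun csO x)\<^sup>2 \<le>
      2 * (indicator S x * (f x - step_fun cs x)\<^sup>2) + 2 * (indicator SO x * (f x - step_fun csO x)\<^sup>2)" for x
  proof -
    consider "x \<in> {r..<u}" | "x \<notin> {r..<u}" "x \<in> S" | "x \<notin> {r..<u}" "x \<notin> S" by blast
    then show ?thesis
    proof cases
      case 1
      then show ?thesis
        using step_fun_eq_0_in_gap[OF csO SO(2)] by (simp add: step_fun_outer_steps[OF \<open>r < u\<close>])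
    next
      case 2
      have "0 \<le> ((f x - step_fun cs x) + (f x - step_fun csO x))\<^sup>2" by simp
      then show ?thesis using 2 SO(3)
        by (auto simp: step_fun_outer_steps[OF \<open>r < u\<close>] power2_eq_square algebra_simps)
    next
      case 3
      then have "x \<notin> SO" using SO(1) by auto
      then show ?thesis using 3 step_fun_eq_0_outside[OF cs] step_fun_eq_0_outside[OF csO]
        by (simp add: step_fun_outer_steps[OF \<open>r < u\<close>])
    qed
  qed
  have "(LINT x|lborel. (step_fun (outer_steps r u cs) x - step_fun csO x)\<^sup>2) \<le>
      (LINT x|lborel. 2 * (indicator S x * (f x - step_fun cs x)\<^sup>2) + 2 * (indicator SO x * (f x - step_fun csO x)\<^sup>2))"
    using L2 bound by (intro integral_mono) (auto simp: set_integrable_def)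
  also have "\<dots> = 2 * (LINT x:S|lborel. (f x - step_fun cs x)\<^sup>2) + 2 * (LINT x:SO|lborel. (f x - step_fun csO x)\<^sup>2)"
    using L2 by (simp add: set_integrable_def set_lebesgue_integral_def)
  finally show ?thesis .
qed

lemma abs_integral_Ico_step_fun_diff_le:
  fixes f :: "real \<Rightarrow> real"
  assumes "r < u" "0 < \<eta>" and cs: "\<forall>(c, a, b)\<in>set cs. {a..b} \<subseteq> S"
    and f: "set_integrable lborel S f" and L2: "set_integrable lborel S (\<lambda>x. (f x - step_fun cs x)\<^sup>2)"
  shows "\<bar>(LINT x|lborel. indicator {r..<u} x * step_fun cs x) - (LINT x|lborel. indicator {r..<u} x * (indicator S x * f x))\<bar>
    \<le> (LINT x:S|lborel. (f x - step_fun cs x)\<^sup>2) / \<eta> + \<eta> * (u - r)"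
proof -
  have fS: "integrable lborel (\<lambda>x. indicator {r..<u} x * (indicator S x * f x))"
    using f integrable_mult_indicator[of "{r..<u}" lborel "\<lambda>x. indicator S x * f x"]
    by (simp add: set_integrable_def)
  have bound: "\<bar>indicator {r..<u} x * step_fun cs x - indicator {r..<u} x * (indicator S x * f x)\<bar> \<le>
      indicator S x * (f x - step_fun cs x)\<^sup>2 / \<eta> + \<eta> * indicator {r..<u} x" for x
  proof (cases "x \<in> S")
    case True
    then show ?thesis using abs_le_square_div_add[OF \<open>0 < \<eta>\<close>, of "f x - step_fun cs x"] \<open>0 < \<eta>\<close>
      by (auto simp: indicator_def abs_minus_commute)
  next
    case False
    then show ?thesis using step_fun_eq_0_outside[OF cs False] \<open>0 < \<eta>\<close> by (simp add: indicator_def)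
  qed
  have "\<bar>(LINT x|lborel. indicator {r..<u} x * step_fun cs x - indicator {r..<u} x * (indicator S x * f x))\<bar> \<le>
      (LINT x|lborel. indicator S x * (f x - step_fun cs x)\<^sup>2 / \<eta> + \<eta> * indicator {r..<u} x)"
    using L2 fS bound by (intro integral_abs_bound_integral) (auto simp: set_integrable_def)
  also have "\<dots> = (LINT x:S|lborel. (f x - step_fun cs x)\<^sup>2) / \<eta> + \<eta> * (u - r)"
    using L2 \<open>r < u\<close> by (simp add: set_integrable_def set_lebesgue_integral_def)
  finally show ?thesis using fS by simp
qed

section \<open>Brownian motion and integrals of step functions\<close>

locale brownian_motion =
  fixes P :: "'a measure" and B :: "real \<Rightarrow> 'a \<Rightarrow> real"
  assumes standard_BM: "standard_BM P B"
begin

sublocale prob_space P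
  using standard_BM unfolding standard_BM_def by auto

lemma borel_measurable_B [measurable]: "B t \<in> borel_measurable P"
  using standard_BM unfolding standard_BM_def by auto

lemma AE_B_0: "AE \<omega> in P. B 0 \<omega> = 0"
  using standard_BM unfolding standard_BM_def by auto

lemma distributed_increment:
  "0 \<le> s \<Longrightarrow> s < t \<Longrightarrow>
    distributed P lborel (\<lambda>\<omega>. B t \<omega> - B s \<omega>) (\<lambda>x. ennreal (normal_density 0 (sqrt (t - s)) x))"
  using standard_BM unfolding standard_BM_def by auto

lemma indep_increments:
  "0 \<le> \<tau> 0 \<Longrightarrow> (\<And>i. i < n \<Longrightarrow> \<tau> i < \<tau> (Suc i)) \<Longrightarrow>
    indep_vars (\<lambda>_. borel) (\<lambda>i \<omega>. B (\<tau> (Suc i)) \<omega> - B (\<tau> i) \<omega>) {..<n}"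
  using standard_BM unfolding standard_BM_def by auto

lemma indep_adjacent_increments:
  assumes "0 \<le> a" "a < b" "b < c"
  shows "indep_var borel (\<lambda>\<omega>. B b \<omega> - B a \<omega>) borel (\<lambda>\<omega>. B c \<omega> - B b \<omega>)"
proof -
  define \<tau> where "\<tau> i = (if i = 0 then a else if i = 1 then b else c)" for i :: nat
  have "indep_vars (\<lambda>_. borel) (\<lambda>i \<omega>. B (\<tau> (Suc i)) \<omega> - B (\<tau> i) \<omega>) {..<2}"
    by (rule indep_increments) (use assms in \<open>auto simp: \<tau>_def less_2_cases_iff\<close>)
  from indep_vars_imp_indep_var[OF this, of 0 1] show ?thesis by (simp add: \<tau>_def)
qed

lemma increment_moments:
  assumes "0 \<le> s" "s \<le> t"
  shows integrable_increment: "integrable P (\<lambda>\<omega>. B t \<omega> - B s \<omega>)"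
    and integrable_increment_square: "integrable P (\<lambda>\<omega>. (B t \<omega> - B s \<omega>)\<^sup>2)"
    and expectation_increment: "expectation (\<lambda>\<omega>. B t \<omega> - B s \<omega>) = 0"
    and expectation_increment_square: "expectation (\<lambda>\<omega>. (B t \<omega> - B s \<omega>)\<^sup>2) = t - s"
proof -
  have "integrable P (\<lambda>\<omega>. B t \<omega> - B s \<omega>) \<and> integrable P (\<lambda>\<omega>. (B t \<omega> - B s \<omega>)\<^sup>2) \<and>
        expectation (\<lambda>\<omega>. B t \<omega> - B s \<omega>) = 0 \<and> expectation (\<lambda>\<omega>. (B t \<omega> - B s \<omega>)\<^sup>2) = t - s"
  proof (cases "s = t")
    case False
    then have st: "s < t" and pos: "0 < sqrt (t - s)" using assms by simp_all
    note D = distributed_increment[OF assms(1) st]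
    have "integrable lborel (\<lambda>x. normal_density 0 (sqrt (t - s)) x * x\<^sup>2)"
      using integrable_normal_moment[of "sqrt (t - s)" 0 2] pos by simp
    moreover have "variance (\<lambda>\<omega>. B t \<omega> - B s \<omega>) = (sqrt (t - s))\<^sup>2"
      using normal_distributed_variance[OF pos D] False assms by simp
    ultimately show ?thesis
      using distributed_integrable_var[OF D] distributed_integrable[OF D, of "\<lambda>x. x\<^sup>2"]
        integrable_normal_moment_nz_1[OF pos] normal_distributed_expectation[OF pos D] False assms
      by simp
  qed simp
  then show "integrable P (\<lambda>\<omega>. B t \<omega> - B s \<omega>)" "integrable P (\<lambda>\<omega>. (B t \<omega> - B s \<omega>)\<^sup>2)"
    "expectation (\<lambda>\<omega>. B t \<omega> - B s \<omega>) = 0" "expectation (\<lambda>\<omega>. (B t \<omega> - B s \<omega>)\<^sup>2) = t - s"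
    by auto
qed

lemma integrable_B: "0 \<le> t \<Longrightarrow> integrable P (B t)"
  by (rule integrable_cong_AE_imp[OF integrable_increment[of 0 t]]) (use AE_B_0 in \<open>auto elim: AE_mp\<close>)

lemma integrable_B_square: "0 \<le> t \<Longrightarrow> integrable P (\<lambda>\<omega>. (B t \<omega>)\<^sup>2)"
  by (rule integrable_cong_AE_imp[OF integrable_increment_square[of 0 t]]) (use AE_B_0 in \<open>auto elim: AE_mp\<close>)

lemma expectation_B_square:
  assumes "0 \<le> t"
  shows "expectation (\<lambda>\<omega>. (B t \<omega>)\<^sup>2) = t"
proof -
  have "expectation (\<lambda>\<omega>. (B t \<omega>)\<^sup>2) = expectation (\<lambda>\<omega>. (B t \<omega> - B 0 \<omega>)\<^sup>2)"
    by (rule integral_cong_AE) (use AE_B_0 in \<open>auto elim!: AE_mp\<close>)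
  then show ?thesis using expectation_increment_square[of 0 t] assms by simp
qed

lemma integrable_B_mult:
  assumes "0 \<le> x" "0 \<le> y"
  shows "integrable P (\<lambda>\<omega>. B x \<omega> * B y \<omega>)"
proof (rule Bochner_Integration.integrable_bound)
  show "integrable P (\<lambda>\<omega>. (B x \<omega>)\<^sup>2 + (B y \<omega>)\<^sup>2)" using integrable_B_square assms by auto
  have "\<bar>a * b\<bar> \<le> a\<^sup>2 + b\<^sup>2" for a b :: real
  proof -
    have "2 * (\<bar>a\<bar> * \<bar>b\<bar>) \<le> a\<^sup>2 + b\<^sup>2" using sum_squares_bound[of "\<bar>a\<bar>" "\<bar>b\<bar>"] by (simp add: mult.assoc)
    moreover have "0 \<le> \<bar>a\<bar> * \<bar>b\<bar>" by simp
    ultimately show ?thesis unfolding abs_mult by linarith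
  qed
  then show "AE \<omega> in P. norm (B x \<omega> * B y \<omega>) \<le> norm ((B x \<omega>)\<^sup>2 + (B y \<omega>)\<^sup>2)" by simp
qed simp

lemma expectation_B_mult:
  assumes "0 \<le> x" "x \<le> y"
  shows "expectation (\<lambda>\<omega>. B x \<omega> * B y \<omega>) = x"
proof (cases "x = 0")
  case True
  then show ?thesis using AE_B_0 by (auto intro: integral_eq_zero_AE elim: AE_mp)
next
  case False
  note increments = integrable_increment[of 0 x] integrable_increment[of x y]
  have "expectation (\<lambda>\<omega>. B x \<omega> * B y \<omega>) =
        expectation (\<lambda>\<omega>. (B x \<omega>)\<^sup>2 + (B x \<omega> - B 0 \<omega>) * (B y \<omega> - B x \<omega>))"
    using AE_B_0 by (auto intro: integral_cong_AE elim: AE_mp simp: power2_eq_square algebra_simps)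
  also have "\<dots> = x + expectation (\<lambda>\<omega>. B x \<omega> - B 0 \<omega>) * expectation (\<lambda>\<omega>. B y \<omega> - B x \<omega>)"
  proof (cases "x = y")
    case False
    then have ind: "indep_var borel (\<lambda>\<omega>. B x \<omega> - B 0 \<omega>) borel (\<lambda>\<omega>. B y \<omega> - B x \<omega>)"
      using \<open>x \<noteq> 0\<close> assms by (intro indep_adjacent_increments) auto
    show ?thesis
      using indep_var_lebesgue_integral[OF ind increments] indep_var_integrable[OF ind increments]
        integrable_B_square[of x] expectation_B_square[of x] assms by simp
  qed (use assms expectation_B_square integrable_B_square in simp)
  finally show ?thesis using assms expectation_increment[of x y] by simp
qed

lemma increment_covariance:
  assumes "0 \<le> a" "a \<le> b" "0 \<le> c" "c \<le> d"
  shows integrable_increment_mult: "integrable P (\<lambda>\<omega>. (B b \<omega> - B a \<omega>) * (B d \<omega> - B c \<omega>))"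
    and expectation_increment_mult: "expectation (\<lambda>\<omega>. (B b \<omega> - B a \<omega>) * (B d \<omega> - B c \<omega>)) =
      (LINT x|lborel. indicator {a..<b} x * indicator {c..<d} x)"
proof -
  have expand: "(\<lambda>\<omega>. (B b \<omega> - B a \<omega>) * (B d \<omega> - B c \<omega>)) =
     (\<lambda>\<omega>. B b \<omega> * B d \<omega> - B b \<omega> * B c \<omega> - B a \<omega> * B d \<omega> + B a \<omega> * B c \<omega>)"
    by (auto simp: fun_eq_iff algebra_simps)
  have int: "integrable P (\<lambda>\<omega>. B x \<omega> * B y \<omega>)" if "x \<in> {a, b}" "y \<in> {c, d}" for x y
    using that assms by (intro integrable_B_mult) auto
  have cov: "expectation (\<lambda>\<omega>. B x \<omega> * B y \<omega>) = min x y" if "x \<in> {a, b}" "y \<in> {c, d}" for x y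
    using that assms expectation_B_mult[of x y] expectation_B_mult[of y x]
    by (cases "x \<le> y") (auto simp: mult.commute)
  show "integrable P (\<lambda>\<omega>. (B b \<omega> - B a \<omega>) * (B d \<omega> - B c \<omega>))"
    unfolding expand using int by auto
  have "expectation (\<lambda>\<omega>. (B b \<omega> - B a \<omega>) * (B d \<omega> - B c \<omega>)) = min b d - min b c - min a d + min a c"
    unfolding expand using int cov by simp
  also have "\<dots> = max 0 (min b d - max a c)" using assms by (auto simp: min_def max_def)
  finally show "expectation (\<lambda>\<omega>. (B b \<omega> - B a \<omega>) * (B d \<omega> - B c \<omega>)) =
      (LINT x|lborel. indicator {a..<b} x * indicator {c..<d} x)"
    by (simp add: integral_indicator_Ico_mult)
qed

lemma step_integral_Nil [simp]: "step_integral B [] \<omega> = 0"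
  by (simp add: step_integral_def)

lemma step_integral_Cons [simp]:
  "step_integral B ((c, a, b) # cs) \<omega> = c * (B b \<omega> - B a \<omega>) + step_integral B cs \<omega>"
  by (simp add: step_integral_def)

lemma step_integral_append: "step_integral B (cs1 @ cs2) \<omega> = step_integral B cs1 \<omega> + step_integral B cs2 \<omega>"
  by (simp add: step_integral_def)

lemma borel_measurable_step_integral [measurable]: "step_integral B cs \<in> borel_measurable P"
  by (induction cs) (auto simp: step_integral_def)

lemma integrable_step_integral: "nonneg_intervals cs \<Longrightarrow> integrable P (step_integral B cs)"
  by (induction cs rule: list_of_triples_induct)
    (simp_all add: step_integral_Nil[abs_def] step_integral_Cons[abs_def] integrable_increment)

lemma increment_step_integral_covariance:
  assumes "0 \<le> a" "a \<le> b" and cs: "nonneg_intervals cs"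
  shows "integrable P (\<lambda>\<omega>. (B b \<omega> - B a \<omega>) * step_integral B cs \<omega>)" (is ?int)
    and "expectation (\<lambda>\<omega>. (B b \<omega> - B a \<omega>) * step_integral B cs \<omega>) =
      (LINT x|lborel. indicator {a..<b} x * step_fun cs x)" (is ?exp)
proof -
  have "?int \<and> ?exp" using cs
  proof (induction cs rule: list_of_triples_induct)
    case (Cons c a' b' cs)
    have "(\<lambda>\<omega>. (B b \<omega> - B a \<omega>) * step_integral B ((c, a', b') # cs) \<omega>) =
      (\<lambda>\<omega>. c * ((B b \<omega> - B a \<omega>) * (B b' \<omega> - B a' \<omega>)) + (B b \<omega> - B a \<omega>) * step_integral B cs \<omega>)"
      "(\<lambda>x. indicator {a..<b} x * step_fun ((c, a', b') # cs) x) =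
      (\<lambda>x. c * (indicator {a..<b} x * indicator {a'..<b'} x) + indicator {a..<b} x * step_fun cs x)"
      by (auto simp: fun_eq_iff algebra_simps)
    then show ?case
      using Cons increment_covariance[OF assms(1,2), of a' b'] by simp
  qed simp
  then show ?int ?exp by auto
qed

lemma step_integral_covariance:
  assumes cs1: "nonneg_intervals cs1" and cs2: "nonneg_intervals cs2"
  shows "integrable P (\<lambda>\<omega>. step_integral B cs1 \<omega> * step_integral B cs2 \<omega>)" (is ?int)
    and "expectation (\<lambda>\<omega>. step_integral B cs1 \<omega> * step_integral B cs2 \<omega>) =
      (LINT x|lborel. step_fun cs1 x * step_fun cs2 x)" (is ?exp)
proof -
  have "?int \<and> ?exp" using cs1
  proof (induction cs1 rule: list_of_triples_induct)
    case (Cons c a b cs)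
    have "(\<lambda>\<omega>. step_integral B ((c, a, b) # cs) \<omega> * step_integral B cs2 \<omega>) =
      (\<lambda>\<omega>. c * ((B b \<omega> - B a \<omega>) * step_integral B cs2 \<omega>) + step_integral B cs \<omega> * step_integral B cs2 \<omega>)"
      "(\<lambda>x. step_fun ((c, a, b) # cs) x * step_fun cs2 x) =
      (\<lambda>x. c * (indicator {a..<b} x * step_fun cs2 x) + step_fun cs x * step_fun cs2 x)"
      by (auto simp: fun_eq_iff algebra_simps)
    then show ?case
      using Cons increment_step_integral_covariance[of a b cs2] cs2 by simp
  qed simp
  then show ?int ?exp by auto
qed

lemma step_integral_isometry:
  assumes "nonneg_intervals cs1" "nonneg_intervals cs2"
  shows "integrable P (\<lambda>\<omega>. (step_integral B cs1 \<omega> - step_integral B cs2 \<omega>)\<^sup>2)"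
    and "expectation (\<lambda>\<omega>. (step_integral B cs1 \<omega> - step_integral B cs2 \<omega>)\<^sup>2) =
         (LINT x|lborel. (step_fun cs1 x - step_fun cs2 x)\<^sup>2)"
proof -
  have square: "(x - y)\<^sup>2 = x * x - 2 * (x * y) + y * y" for x y :: real
    by (simp add: power2_eq_square algebra_simps)
  note cov = step_integral_covariance[OF assms(1) assms(1)] step_integral_covariance[OF assms(1) assms(2)]
    step_integral_covariance[OF assms(2) assms(2)]
  show "integrable P (\<lambda>\<omega>. (step_integral B cs1 \<omega> - step_integral B cs2 \<omega>)\<^sup>2)"
    unfolding square using cov by auto
  show "expectation (\<lambda>\<omega>. (step_integral B cs1 \<omega> - step_integral B cs2 \<omega>)\<^sup>2) =
         (LINT x|lborel. (step_fun cs1 x - step_fun cs2 x)\<^sup>2)"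
    unfolding square using cov by simp
qed

section \<open>The past-future filtration\<close>

abbreviation generators :: "real set \<Rightarrow> 'a set set" where
  "generators S \<equiv> {B w -` A \<inter> space P | w A. w \<in> S \<and> A \<in> sets borel}"

lemma space_gen_sigma [simp]: "space (gen_sigma P B S) = space P"
  unfolding gen_sigma_def by (rule space_measure_of) auto

lemma sets_gen_sigma: "sets (gen_sigma P B S) = sigma_sets (space P) (generators S)"
  unfolding gen_sigma_def by (rule sets_measure_of) auto

lemma subalgebra_gen_sigma: "subalgebra P (gen_sigma P B S)"
  unfolding subalgebra_def sets_gen_sigma by (auto intro!: sets.sigma_sets_subset)

lemma sigma_finite_subalgebra_gen_sigma: "sigma_finite_subalgebra P (gen_sigma P B S)"
proof -
  have "finite_measure_subalgebra P (gen_sigma P B S)"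
    by unfold_locales (rule subalgebra_gen_sigma)
  then show ?thesis by (rule finite_measure_subalgebra_is_sigma_finite)
qed

lemma sigma_finite_subalgebra_pf_filtration: "sigma_finite_subalgebra P (pf_filtration P B s t)"
  unfolding pf_filtration_def by (rule sigma_finite_subalgebra_gen_sigma)

lemma measurable_gen_sigma_mono:
  assumes "f \<in> borel_measurable (gen_sigma P B S)" "S \<subseteq> S'"
  shows "f \<in> borel_measurable (gen_sigma P B S')"
proof -
  have "sets (gen_sigma P B S) \<subseteq> sets (gen_sigma P B S')"
    unfolding sets_gen_sigma using assms(2) by (intro sigma_sets_mono') blast
  then show ?thesis
    using assms(1) measurable_mono[of borel borel "gen_sigma P B S" "gen_sigma P B S'"] by auto
qed

lemma B_measurable_gen_sigma: "w \<in> S \<Longrightarrow> B w \<in> borel_measurable (gen_sigma P B S)"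
  by (rule measurableI) (auto simp: sets_gen_sigma)

lemma measurable_from_gen_sigma: "f \<in> borel_measurable (gen_sigma P B S) \<Longrightarrow> f \<in> borel_measurable P"
  by (rule measurable_from_subalg[OF subalgebra_gen_sigma])

text \<open>Increments from the past and the future of \<open>[r, u]\<close>. They are independent of the
  increments inside \<open>[r, u]\<close>, and together with \<open>B 0\<close> and \<open>B u - B r\<close> they generate
  \<open>pf_filtration P B r u\<close>.\<close>

definition outer_increment :: "real \<Rightarrow> real \<Rightarrow> real \<Rightarrow> 'a \<Rightarrow> real" where
  "outer_increment r u w \<omega> = (if w \<le> r then B w \<omega> - B 0 \<omega> else B w \<omega> - B u \<omega>)"

definition outer_cylinder :: "real \<Rightarrow> real \<Rightarrow> real set \<Rightarrow> (real \<Rightarrow> real set) \<Rightarrow> 'a set" where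
  "outer_cylinder r u W A = {\<omega> \<in> space P. \<forall>w\<in>W. outer_increment r u w \<omega> \<in> A w}"

lemma borel_measurable_outer_increment [measurable]: "outer_increment r u w \<in> borel_measurable P"
  unfolding outer_increment_def by measurable

lemma outer_cylinder_in_events:
  assumes "finite W" "\<And>w. A w \<in> sets borel"
  shows "outer_cylinder r u W A \<in> events"
proof -
  have [measurable]: "\<And>w. A w \<in> sets borel" by (rule assms(2))
  show ?thesis unfolding outer_cylinder_def
    by (rule sets.sets_Collect_finite_All[OF _ assms(1)]) measurable
qed

lemma outer_cylinder_Int:
  "outer_cylinder r u W1 A1 \<inter> outer_cylinder r u W2 A2 =
   outer_cylinder r u (W1 \<union> W2) (\<lambda>w. (if w \<in> W1 then A1 w else UNIV) \<inter> (if w \<in> W2 then A2 w else UNIV))"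
  by (auto simp: outer_cylinder_def)

lemma outer_increment_eq_sum:
  assumes mono: "strict_mono_on {..n} \<tau>" and "\<tau> 0 = 0"
    and i: "Suc (Suc i) \<le> n" "\<tau> i = r" "\<tau> (Suc (Suc i)) = u"
    and w: "w \<in> \<tau> ` {..n}" "w \<in> {0..r} \<union> {u..}"
  obtains I where "I \<subseteq> {..<n} - {i, Suc i}"
    "\<And>\<omega>. outer_increment r u w \<omega> = (\<Sum>k\<in>I. B (\<tau> (Suc k)) \<omega> - B (\<tau> k) \<omega>)"
proof -
  obtain j where j: "j \<le> n" "\<tau> j = w" using w(1) by auto
  have telescope: "B (\<tau> l) \<omega> - B (\<tau> k) \<omega> = (\<Sum>m = k..<l. B (\<tau> (Suc m)) \<omega> - B (\<tau> m) \<omega>)"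
    if "k \<le> l" for k l \<omega>
    by (rule sum_Suc_diff'[symmetric, OF that])
  show ?thesis
  proof (cases "w \<le> r")
    case True
    then have "j \<le> i" using strict_mono_on_less[OF mono, of i j] i j by auto
    moreover have "outer_increment r u w \<omega> = (\<Sum>m\<in>{0..<j}. B (\<tau> (Suc m)) \<omega> - B (\<tau> m) \<omega>)" for \<omega>
      using True j \<open>\<tau> 0 = 0\<close> telescope[of 0 j \<omega>] by (simp add: outer_increment_def)
    ultimately show ?thesis using i by (intro that[of "{0..<j}"]) auto
  next
    case False
    then have "u \<le> w" "r < w" using w(2) by auto
    then have "Suc (Suc i) \<le> j" using strict_mono_on_less[OF mono, of j "Suc (Suc i)"] i j by auto
    moreover from this have "outer_increment r u w \<omega> = (\<Sum>m\<in>{Suc (Suc i)..<j}. B (\<tau> (Suc m)) \<omega> - B (\<tau> m) \<omega>)"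
      for \<omega> using False j i telescope[of "Suc (Suc i)" j \<omega>] by (simp add: outer_increment_def)
    ultimately show ?thesis using j by (intro that[of "{Suc (Suc i)..<j}"]) auto
  qed
qed

lemma outer_increments_eq_sums:
  assumes r: "0 \<le> r" "r < v" "v < u" and W: "finite W" "W \<subseteq> {0..r} \<union> {u..}"
  obtains n :: nat and \<tau> i I where "strict_mono_on {..n} \<tau>" "\<tau> 0 = 0"
    "Suc (Suc i) \<le> n" "\<tau> i = r" "\<tau> (Suc i) = v" "\<tau> (Suc (Suc i)) = u"
    "\<And>w. w \<in> W \<Longrightarrow> I w \<subseteq> {..<n} - {i, Suc i}"
    "\<And>w \<omega>. w \<in> W \<Longrightarrow> outer_increment r u w \<omega> = (\<Sum>k\<in>I w. B (\<tau> (Suc k)) \<omega> - B (\<tau> k) \<omega>)"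
proof -
  obtain n \<tau> i where mono: "strict_mono_on {..n} \<tau>" and "\<tau> 0 = 0" and W_\<tau>: "W \<subseteq> \<tau> ` {..n}"
    and i: "Suc (Suc i) \<le> n" "\<tau> i = r" "\<tau> (Suc i) = v" "\<tau> (Suc (Suc i)) = u"
    by (rule enumeration_with_adjacent_points[OF r W])
  have "\<forall>w\<in>W. \<exists>I. I \<subseteq> {..<n} - {i, Suc i} \<and>
      (\<forall>\<omega>. outer_increment r u w \<omega> = (\<Sum>k\<in>I. B (\<tau> (Suc k)) \<omega> - B (\<tau> k) \<omega>))"
  proof
    fix w assume "w \<in> W"
    obtain I where "I \<subseteq> {..<n} - {i, Suc i}"
      "\<And>\<omega>. outer_increment r u w \<omega> = (\<Sum>k\<in>I. B (\<tau> (Suc k)) \<omega> - B (\<tau> k) \<omega>)"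
      by (rule outer_increment_eq_sum[OF mono \<open>\<tau> 0 = 0\<close> i(1,2,4), of w]) (use \<open>w \<in> W\<close> W_\<tau> W(2) in auto)
    then show "\<exists>I. I \<subseteq> {..<n} - {i, Suc i} \<and>
        (\<forall>\<omega>. outer_increment r u w \<omega> = (\<Sum>k\<in>I. B (\<tau> (Suc k)) \<omega> - B (\<tau> k) \<omega>))"
      by blast
  qed
  then obtain I where "\<forall>w\<in>W. I w \<subseteq> {..<n} - {i, Suc i} \<and>
      (\<forall>\<omega>. outer_increment r u w \<omega> = (\<Sum>k\<in>I w. B (\<tau> (Suc k)) \<omega> - B (\<tau> k) \<omega>))"
    by (rule bchoice[THEN exE])
  then show ?thesis using that[OF mono \<open>\<tau> 0 = 0\<close> i] by blast
qed

lemma indep_outer_cylinder_inner_increments: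
  fixes g :: "real \<times> real \<Rightarrow> real"
  assumes r: "0 \<le> r" "r < v" "v < u"
    and W: "finite W" "W \<subseteq> {0..r} \<union> {u..}" and A: "\<And>w. A w \<in> sets borel"
    and g: "g \<in> borel_measurable (borel \<Otimes>\<^sub>M borel)"
  obtains Y where "indep_var borel Y borel (\<lambda>\<omega>. g (B v \<omega> - B r \<omega>, B u \<omega> - B v \<omega>))"
    "\<And>\<omega>. \<omega> \<in> space P \<Longrightarrow> Y \<omega> = indicator (outer_cylinder r u W A) \<omega>"
proof -
  obtain n :: nat and \<tau> i I where mono: "strict_mono_on {..n} \<tau>" and "\<tau> 0 = 0"
    and i: "Suc (Suc i) \<le> n" "\<tau> i = r" "\<tau> (Suc i) = v" "\<tau> (Suc (Suc i)) = u"
    and I: "\<And>w. w \<in> W \<Longrightarrow> I w \<subseteq> {..<n} - {i, Suc i}"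
      "\<And>w \<omega>. w \<in> W \<Longrightarrow> outer_increment r u w \<omega> = (\<Sum>k\<in>I w. B (\<tau> (Suc k)) \<omega> - B (\<tau> k) \<omega>)"
    using outer_increments_eq_sums[OF r W] by blast
  define \<Delta> where "\<Delta> k \<omega> = B (\<tau> (Suc k)) \<omega> - B (\<tau> k) \<omega>" for k \<omega>
  define K where "K = {..<n} - {i, Suc i}"
  define Y where "Y f = (\<Prod>w\<in>W. indicator (A w) (\<Sum>k\<in>I w. f k) :: real)" for f :: "nat \<Rightarrow> real"
  have "indep_vars (\<lambda>_. borel) \<Delta> {..<n}"
    unfolding \<Delta>_def[abs_def] by (rule indep_increments) (use \<open>\<tau> 0 = 0\<close> strict_mono_onD[OF mono] in auto)
  moreover have "Y \<in> borel_measurable (Pi\<^sub>M K (\<lambda>_. borel))"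
  proof -
    have "(\<lambda>f. \<Sum>k\<in>I w. f k :: real) \<in> borel_measurable (Pi\<^sub>M K (\<lambda>_. borel))" if "w \<in> W" for w
      using I(1)[OF that] unfolding K_def
      by (intro borel_measurable_sum[where f="\<lambda>k f. f k"] measurable_component_singleton) auto
    then show ?thesis unfolding Y_def
      by (intro borel_measurable_prod measurable_compose[OF _ borel_measurable_indicator']) (auto simp: A)
  qed
  moreover have "(\<lambda>f. g (f i, f (Suc i))) \<in> borel_measurable (Pi\<^sub>M {i, Suc i} (\<lambda>_. borel))"
    by (rule measurable_compose[OF _ g]) (intro measurable_Pair measurable_component_singleton; simp)
  ultimately have "indep_var borel (Y \<circ> (\<lambda>\<omega>. restrict (\<lambda>k. \<Delta> k \<omega>) K))
      borel ((\<lambda>f. g (f i, f (Suc i))) \<circ> (\<lambda>\<omega>. restrict (\<lambda>k. \<Delta> k \<omega>) {i, Suc i}))"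
    using i(1) by (intro indep_var_compose[OF indep_var_restrict]) (auto simp: K_def)
  moreover have "(\<lambda>f. g (f i, f (Suc i))) \<circ> (\<lambda>\<omega>. restrict (\<lambda>k. \<Delta> k \<omega>) {i, Suc i}) =
      (\<lambda>\<omega>. g (B v \<omega> - B r \<omega>, B u \<omega> - B v \<omega>))"
    using i(2-4) by (simp add: \<Delta>_def comp_def)
  moreover have "Y (restrict (\<lambda>k. \<Delta> k \<omega>) K) = indicator (outer_cylinder r u W A) \<omega>"
    if "\<omega> \<in> space P" for \<omega>
  proof -
    have "(\<Sum>k\<in>I w. restrict (\<lambda>k. \<Delta> k \<omega>) K k) = outer_increment r u w \<omega>" if "w \<in> W" for w
      using I[OF that] by (auto simp: K_def \<Delta>_def intro!: sum.cong)
    then have "Y (restrict (\<lambda>k. \<Delta> k \<omega>) K) = (\<Prod>w\<in>W. indicator (A w) (outer_increment r u w \<omega>))"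
      unfolding Y_def by (auto intro!: prod.cong)
    also have "\<dots> = indicator (outer_cylinder r u W A) \<omega>"
      using that W(1) by (auto simp: outer_cylinder_def indicator_def prod_zero)
    finally show ?thesis .
  qed
  ultimately show ?thesis using that[of "Y \<circ> (\<lambda>\<omega>. restrict (\<lambda>k. \<Delta> k \<omega>) K)"] by simp
qed

lemma expectation_outer_cylinder_mult:
  assumes r: "0 \<le> r" "r < v" "v < u"
    and W: "finite W" "W \<subseteq> {0..r} \<union> {u..}" and A: "\<And>w. A w \<in> sets borel"
    and g[measurable]: "g \<in> borel_measurable (borel \<Otimes>\<^sub>M borel)"
    and int: "integrable P (\<lambda>\<omega>. g (B v \<omega> - B r \<omega>, B u \<omega> - B v \<omega>))"
  shows "expectation (\<lambda>\<omega>. indicator (outer_cylinder r u W A) \<omega> * g (B v \<omega> - B r \<omega>, B u \<omega> - B v \<omega>)) =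
         prob (outer_cylinder r u W A) * expectation (\<lambda>\<omega>. g (B v \<omega> - B r \<omega>, B u \<omega> - B v \<omega>))"
proof -
  obtain Y where indep_g: "indep_var borel Y borel (\<lambda>\<omega>. g (B v \<omega> - B r \<omega>, B u \<omega> - B v \<omega>))"
    and Y: "\<And>\<omega>. \<omega> \<in> space P \<Longrightarrow> Y \<omega> = indicator (outer_cylinder r u W A) \<omega>"
    using indep_outer_cylinder_inner_increments[of r v u W A, OF r W A g] by blast
  have C: "outer_cylinder r u W A \<in> events" by (rule outer_cylinder_in_events[OF W(1) A])
  have "integrable P Y \<longleftrightarrow> integrable P (indicator (outer_cylinder r u W A) :: 'a \<Rightarrow> real)"
    by (rule Bochner_Integration.integrable_cong) (simp_all add: Y)
  then have int_Y: "integrable P Y" using C by (simp add: emeasure_eq_measure)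
  have "expectation (\<lambda>\<omega>. indicator (outer_cylinder r u W A) \<omega> * g (B v \<omega> - B r \<omega>, B u \<omega> - B v \<omega>)) =
      expectation (\<lambda>\<omega>. Y \<omega> * g (B v \<omega> - B r \<omega>, B u \<omega> - B v \<omega>))"
    by (rule Bochner_Integration.integral_cong) (simp_all add: Y)
  also have "\<dots> = expectation Y * expectation (\<lambda>\<omega>. g (B v \<omega> - B r \<omega>, B u \<omega> - B v \<omega>))"
    by (rule indep_var_lebesgue_integral[OF indep_g int_Y int])
  also have "expectation Y = prob (outer_cylinder r u W A)"
    using C by (subst Bochner_Integration.integral_cong[of P P Y "indicator (outer_cylinder r u W A)"]) (simp_all add: Y)
  finally show ?thesis .
qed

text \<open>\<open>B 0\<close> vanishes only almost surely, so it is kept as a separate generator.\<close>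

definition pf_generator :: "real \<Rightarrow> real \<Rightarrow> 'a set set" where
  "pf_generator r u = {outer_cylinder r u W A \<inter> (\<lambda>\<omega>. B u \<omega> - B r \<omega>) -` E \<inter> B 0 -` E0 | W A E E0.
      finite W \<and> W \<subseteq> {0..r} \<union> {u..} \<and> (\<forall>w. A w \<in> sets borel) \<and> E \<in> sets borel \<and> E0 \<in> sets borel}"

lemma pf_generatorI:
  "finite W \<Longrightarrow> W \<subseteq> {0..r} \<union> {u..} \<Longrightarrow> (\<And>w. A w \<in> sets borel) \<Longrightarrow> E \<in> sets borel \<Longrightarrow> E0 \<in> sets borel \<Longrightarrow>
    outer_cylinder r u W A \<inter> (\<lambda>\<omega>. B u \<omega> - B r \<omega>) -` E \<inter> B 0 -` E0 \<in> pf_generator r u"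
  unfolding pf_generator_def by blast

lemma pf_generator_subset_events: "pf_generator r u \<subseteq> events"
proof
  fix X assume "X \<in> pf_generator r u"
  then obtain W A E E0 where X: "X = outer_cylinder r u W A \<inter> (\<lambda>\<omega>. B u \<omega> - B r \<omega>) -` E \<inter> B 0 -` E0"
    and W: "finite W" and A: "\<forall>w. A w \<in> sets borel" and [measurable]: "E \<in> sets borel" "E0 \<in> sets borel"
    unfolding pf_generator_def by blast
  have "X = outer_cylinder r u W A \<inter> ((\<lambda>\<omega>. B u \<omega> - B r \<omega>) -` E \<inter> space P) \<inter> (B 0 -` E0 \<inter> space P)"
    using X by (auto simp: outer_cylinder_def)
  also have "\<dots> \<in> events"
  proof -
    have "(\<lambda>\<omega>. B u \<omega> - B r \<omega>) -` E \<inter> space P \<in> events" "B 0 -` E0 \<inter> space P \<in> events" by measurable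
    moreover have "outer_cylinder r u W A \<in> events" using outer_cylinder_in_events[OF W] A by auto
    ultimately show ?thesis by (intro sets.Int[OF sets.Int])
  qed
  finally show "X \<in> events" .
qed

lemma Int_stable_pf_generator: "Int_stable (pf_generator r u)"
proof (rule Int_stableI)
  fix X Y assume "X \<in> pf_generator r u" "Y \<in> pf_generator r u"
  then obtain W1 A1 E1 E01 W2 A2 E2 E02 where
    X: "X = outer_cylinder r u W1 A1 \<inter> (\<lambda>\<omega>. B u \<omega> - B r \<omega>) -` E1 \<inter> B 0 -` E01"
      "finite W1" "W1 \<subseteq> {0..r} \<union> {u..}" "\<forall>w. A1 w \<in> sets borel" "E1 \<in> sets borel" "E01 \<in> sets borel"
    and Y: "Y = outer_cylinder r u W2 A2 \<inter> (\<lambda>\<omega>. B u \<omega> - B r \<omega>) -` E2 \<inter> B 0 -` E02"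
      "finite W2" "W2 \<subseteq> {0..r} \<union> {u..}" "\<forall>w. A2 w \<in> sets borel" "E2 \<in> sets borel" "E02 \<in> sets borel"
    unfolding pf_generator_def by blast
  have "X \<inter> Y = outer_cylinder r u (W1 \<union> W2) (\<lambda>w. (if w \<in> W1 then A1 w else UNIV) \<inter> (if w \<in> W2 then A2 w else UNIV))
      \<inter> (\<lambda>\<omega>. B u \<omega> - B r \<omega>) -` (E1 \<inter> E2) \<inter> B 0 -` (E01 \<inter> E02)"
    unfolding X(1) Y(1) outer_cylinder_Int[symmetric] by auto
  also have "\<dots> \<in> pf_generator r u"
    by (rule pf_generatorI) (use X Y in auto)
  finally show "X \<inter> Y \<in> pf_generator r u" .
qed

lemma vimage_in_pf_generator:
  assumes "E \<in> sets borel"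
  shows "w \<in> {0..r} \<union> {u..} \<Longrightarrow> outer_increment r u w -` E \<inter> space P \<in> pf_generator r u"
    and "(\<lambda>\<omega>. B u \<omega> - B r \<omega>) -` E \<inter> space P \<in> pf_generator r u"
    and "B 0 -` E \<inter> space P \<in> pf_generator r u"
proof -
  assume "w \<in> {0..r} \<union> {u..}"
  have "outer_increment r u w -` E \<inter> space P =
      outer_cylinder r u {w} (\<lambda>_. E) \<inter> (\<lambda>\<omega>. B u \<omega> - B r \<omega>) -` UNIV \<inter> B 0 -` UNIV"
    by (auto simp: outer_cylinder_def)
  also have "\<dots> \<in> pf_generator r u" by (rule pf_generatorI) (use assms \<open>w \<in> _\<close> in auto)
  finally show "outer_increment r u w -` E \<inter> space P \<in> pf_generator r u" .
next
  have "(\<lambda>\<omega>. B u \<omega> - B r \<omega>) -` E \<inter> space P =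
      outer_cylinder r u {} (\<lambda>_. UNIV) \<inter> (\<lambda>\<omega>. B u \<omega> - B r \<omega>) -` E \<inter> B 0 -` UNIV"
    by (auto simp: outer_cylinder_def)
  also have "\<dots> \<in> pf_generator r u" by (rule pf_generatorI) (use assms in auto)
  finally show "(\<lambda>\<omega>. B u \<omega> - B r \<omega>) -` E \<inter> space P \<in> pf_generator r u" .
next
  have "B 0 -` E \<inter> space P = outer_cylinder r u {} (\<lambda>_. UNIV) \<inter> (\<lambda>\<omega>. B u \<omega> - B r \<omega>) -` UNIV \<inter> B 0 -` E"
    by (auto simp: outer_cylinder_def)
  also have "\<dots> \<in> pf_generator r u" by (rule pf_generatorI) (use assms in auto)
  finally show "B 0 -` E \<inter> space P \<in> pf_generator r u" .
qed

lemma sets_pf_filtration_subset_pf_generator: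
  assumes "0 \<le> r"
  shows "sets (pf_filtration P B r u) \<subseteq> sigma_sets (space P) (pf_generator r u)"
proof -
  let ?M = "sigma (space P) (pf_generator r u)"
  have Pow: "pf_generator r u \<subseteq> Pow (space P)"
    using pf_generator_subset_events sets.sets_into_space by blast
  have measurable: "f \<in> borel_measurable ?M"
    if "\<And>E. E \<in> sets borel \<Longrightarrow> f -` E \<inter> space P \<in> pf_generator r u" for f :: "'a \<Rightarrow> real"
    using that Pow by (intro measurableI) (auto simp: sets_measure_of space_measure_of)
  have outer: "outer_increment r u w \<in> borel_measurable ?M" if "w \<in> {0..r} \<union> {u..}" for w
    using that by (intro measurable vimage_in_pf_generator)
  have inner: "(\<lambda>\<omega>. B u \<omega> - B r \<omega>) \<in> borel_measurable ?M" and "B 0 \<in> borel_measurable ?M"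
    by (intro measurable vimage_in_pf_generator; assumption)+
  have B: "B w \<in> borel_measurable ?M" if w: "w \<in> {0..r} \<union> {u..}" for w
  proof (cases "w \<le> r")
    case True
    then have "B w = (\<lambda>\<omega>. outer_increment r u w \<omega> + B 0 \<omega>)" by (auto simp: outer_increment_def)
    then show ?thesis using outer[OF w] \<open>B 0 \<in> borel_measurable ?M\<close> by simp
  next
    case False
    then have "B w = (\<lambda>\<omega>. outer_increment r u w \<omega> + (B u \<omega> - B r \<omega>) + outer_increment r u r \<omega> + B 0 \<omega>)"
      by (auto simp: outer_increment_def)
    then show ?thesis using outer[OF w] outer[of r] assms inner \<open>B 0 \<in> borel_measurable ?M\<close> by simp
  qed
  have "generators ({0..r} \<union> {u..}) \<subseteq> sigma_sets (space P) (pf_generator r u)"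
    using measurable_sets[OF B] Pow by (auto simp: space_measure_of sets_measure_of)
  then show ?thesis
    unfolding pf_filtration_def sets_gen_sigma by (rule sigma_sets_mono)
qed

section \<open>The Brownian bridge\<close>

lemma expectation_bridge_residual_indicator:
  assumes r: "0 \<le> r" "r < v" "v < u" and [measurable]: "E \<in> sets borel"
  shows "expectation (\<lambda>\<omega>. indicator E (B u \<omega> - B r \<omega>) *
           ((B v \<omega> - B r \<omega>) - (v - r) / (u - r) * (B u \<omega> - B r \<omega>))) = 0"
proof -
  define X where "X \<omega> = B v \<omega> - B r \<omega>" for \<omega>
  define S where "S \<omega> = B u \<omega> - B r \<omega>" for \<omega>
  have "expectation (\<lambda>\<omega>. X \<omega> * indicator E (X \<omega> + (B u \<omega> - B v \<omega>))) =
      (v - r) / ((v - r) + (u - v)) *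
      expectation (\<lambda>\<omega>. (X \<omega> + (B u \<omega> - B v \<omega>)) * indicator E (X \<omega> + (B u \<omega> - B v \<omega>)))"
    unfolding X_def using r
    by (intro indep_normal_first_moment_given_sum distributed_increment indep_adjacent_increments) auto
  then have moment: "expectation (\<lambda>\<omega>. X \<omega> * indicator E (S \<omega>)) =
      (v - r) / (u - r) * expectation (\<lambda>\<omega>. S \<omega> * indicator E (S \<omega>))"
    by (simp add: X_def S_def)
  have "integrable P (\<lambda>\<omega>. X \<omega> * indicator E (S \<omega>))" "integrable P (\<lambda>\<omega>. S \<omega> * indicator E (S \<omega>))"
    using integrable_increment[of r v] integrable_increment[of r u] r unfolding X_def S_def
    by (auto intro: Bochner_Integration.integrable_bound simp: indicator_def)
  then have "expectation (\<lambda>\<omega>. X \<omega> * indicator E (S \<omega>) - (v - r) / (u - r) * (S \<omega> * indicator E (S \<omega>))) = 0"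
    using moment by simp
  moreover have "(\<lambda>\<omega>. X \<omega> * indicator E (S \<omega>) - (v - r) / (u - r) * (S \<omega> * indicator E (S \<omega>))) =
      (\<lambda>\<omega>. indicator E (S \<omega>) * (X \<omega> - (v - r) / (u - r) * S \<omega>))"
    by (auto simp: fun_eq_iff algebra_simps)
  ultimately show ?thesis by (simp add: X_def S_def)
qed

lemma set_integral_bridge_residual:
  assumes r: "0 \<le> r" "r < v" "v < u" and X: "X \<in> pf_generator r u"
  shows "(LINT \<omega>:X|P. (B v \<omega> - B r \<omega>) - (v - r) / (u - r) * (B u \<omega> - B r \<omega>)) = 0"
proof -
  define Z where "Z \<omega> = (B v \<omega> - B r \<omega>) - (v - r) / (u - r) * (B u \<omega> - B r \<omega>)" for \<omega>
  define g where "g E = (\<lambda>(x, y). indicator E (x + y) * (x - (v - r) / (u - r) * (x + y)) :: real)" for E :: "real set"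
  obtain W A E E0 where X_eq: "X = outer_cylinder r u W A \<inter> (\<lambda>\<omega>. B u \<omega> - B r \<omega>) -` E \<inter> B 0 -` E0"
    and W: "finite W" "W \<subseteq> {0..r} \<union> {u..}" and A: "\<forall>w. A w \<in> sets borel"
    and [measurable]: "E \<in> sets borel" "E0 \<in> sets borel"
    using X unfolding pf_generator_def by blast
  define C where "C = outer_cylinder r u W A \<inter> ((\<lambda>\<omega>. B u \<omega> - B r \<omega>) -` E \<inter> space P)"
  have "outer_cylinder r u W A \<in> events" using outer_cylinder_in_events[OF W(1)] A by auto
  then have [measurable]: "C \<in> events" unfolding C_def by measurable
  have [measurable]: "X \<in> events" using X pf_generator_subset_events by auto
  have "AE \<omega> in P. (\<omega> \<in> (if 0 \<in> E0 then C else {})) = (\<omega> \<in> X)"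
    using AE_B_0 by eventually_elim (cases "0 \<in> E0"; auto simp: X_eq C_def outer_cylinder_def)
  then have "(LINT \<omega>:X|P. Z \<omega>) = (LINT \<omega>:(if 0 \<in> E0 then C else {})|P. Z \<omega>)"
    by (intro set_integral_cong_set[symmetric]) (auto simp: set_borel_measurable_def Z_def)
  moreover have "(LINT \<omega>:C|P. Z \<omega>) =
      expectation (\<lambda>\<omega>. indicator (outer_cylinder r u W A) \<omega> * g E (B v \<omega> - B r \<omega>, B u \<omega> - B v \<omega>))"
  proof -
    have "indicator C \<omega> * Z \<omega> = indicator (outer_cylinder r u W A) \<omega> * g E (B v \<omega> - B r \<omega>, B u \<omega> - B v \<omega>)"
      if "\<omega> \<in> space P" for \<omega>
      using that by (simp add: C_def Z_def g_def indicator_inter_arith indicator_vimage)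
    then show ?thesis
      unfolding set_lebesgue_integral_def by (intro Bochner_Integration.integral_cong) auto
  qed
  moreover have "\<dots> = prob (outer_cylinder r u W A) * expectation (\<lambda>\<omega>. g E (B v \<omega> - B r \<omega>, B u \<omega> - B v \<omega>))"
  proof (rule expectation_outer_cylinder_mult[OF r W])
    have "integrable P Z" using integrable_increment[of r v] integrable_increment[of r u] r by (simp add: Z_def[abs_def])
    then show "integrable P (\<lambda>\<omega>. g E (B v \<omega> - B r \<omega>, B u \<omega> - B v \<omega>))"
      by (rule Bochner_Integration.integrable_bound) (auto simp: Z_def g_def indicator_def)
  qed (use A in \<open>auto simp: g_def\<close>)
  moreover have "expectation (\<lambda>\<omega>. g E (B v \<omega> - B r \<omega>, B u \<omega> - B v \<omega>)) = 0"
    using expectation_bridge_residual_indicator[OF r] by (simp add: g_def)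
  ultimately show ?thesis by (simp add: Z_def set_lebesgue_integral_def)
qed

lemma cond_exp_bridge_increment:
  assumes r: "0 \<le> r" "r < v" "v < u"
  shows "AE \<omega> in P. real_cond_exp P (pf_filtration P B r u) (\<lambda>\<omega>. B v \<omega> - B r \<omega>) \<omega> =
                     (v - r) / (u - r) * (B u \<omega> - B r \<omega>)"
proof -
  interpret sigma_finite_subalgebra P "pf_filtration P B r u"
    by (rule sigma_finite_subalgebra_pf_filtration)
  have int: "integrable P (\<lambda>\<omega>. B v \<omega> - B r \<omega>)" "integrable P (\<lambda>\<omega>. (v - r) / (u - r) * (B u \<omega> - B r \<omega>))"
    using r integrable_increment[of r v] integrable_increment[of r u] by auto
  have int_diff: "integrable P (\<lambda>\<omega>. (B v \<omega> - B r \<omega>) - (v - r) / (u - r) * (B u \<omega> - B r \<omega>))"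
    using int by auto
  have mean_diff: "expectation (\<lambda>\<omega>. (B v \<omega> - B r \<omega>) - (v - r) / (u - r) * (B u \<omega> - B r \<omega>)) = 0"
    using int r expectation_increment[of r v] expectation_increment[of r u] by simp
  show ?thesis
  proof (rule real_cond_exp_charact)
    fix X assume "X \<in> sets (pf_filtration P B r u)"
    then have X: "X \<in> sigma_sets (space P) (pf_generator r u)"
      using sets_pf_filtration_subset_pf_generator[OF r(1)] by auto
    then have "X \<in> events" using pf_generator_subset_events sets.sigma_sets_subset by blast
    then have "(LINT \<omega>:X|P. B v \<omega> - B r \<omega>) - (LINT \<omega>:X|P. (v - r) / (u - r) * (B u \<omega> - B r \<omega>)) =
        (LINT \<omega>:X|P. (B v \<omega> - B r \<omega>) - (v - r) / (u - r) * (B u \<omega> - B r \<omega>))"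
      using integrable_mult_indicator[OF \<open>X \<in> events\<close> int(1)] integrable_mult_indicator[OF \<open>X \<in> events\<close> int(2)]
      by (intro set_integral_diff(2)[symmetric]) (simp_all add: set_integrable_def)
    also have "\<dots> = 0"
      by (rule set_integral_eq_0_sigma_sets[OF Int_stable_pf_generator pf_generator_subset_events
            int_diff mean_diff set_integral_bridge_residual[OF r] X])
    finally show "(LINT \<omega>:X|P. B v \<omega> - B r \<omega>) = (LINT \<omega>:X|P. (v - r) / (u - r) * (B u \<omega> - B r \<omega>))"
      by simp
  next
    have [measurable]: "B u \<in> borel_measurable (pf_filtration P B r u)" "B r \<in> borel_measurable (pf_filtration P B r u)"
      using r unfolding pf_filtration_def by (auto intro!: B_measurable_gen_sigma)
    show "(\<lambda>\<omega>. (v - r) / (u - r) * (B u \<omega> - B r \<omega>)) \<in> borel_measurable (pf_filtration P B r u)"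
      by measurable
  qed (use int in auto)
qed

lemma B_measurable_pf_filtration:
  "w \<in> {0..s} \<union> {t..} \<Longrightarrow> B w \<in> borel_measurable (pf_filtration P B s t)"
  unfolding pf_filtration_def by (rule B_measurable_gen_sigma)

lemma cond_exp_B:
  assumes r: "0 \<le> r" "r < u" and "0 \<le> x"
  shows "AE \<omega> in P. real_cond_exp P (pf_filtration P B r u) (B x) \<omega> =
    B (min x r) \<omega> + (B (max x u) \<omega> - B u \<omega>) + bridge_weight r u x * (B u \<omega> - B r \<omega>)"
proof -
  interpret sigma_finite_subalgebra P "pf_filtration P B r u"
    by (rule sigma_finite_subalgebra_pf_filtration)
  have outer: "AE \<omega> in P. real_cond_exp P (pf_filtration P B r u) (B w) \<omega> = B w \<omega>"
    if "w \<in> {0..r} \<union> {u..}" for w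
    using that r by (intro real_cond_exp_F_meas integrable_B B_measurable_pf_filtration) auto
  consider "x \<le> r" | "u \<le> x" | "r < x" "x < u" by linarith
  then show ?thesis
  proof cases
    case 1
    then show ?thesis using outer[of x] r \<open>0 \<le> x\<close> by (simp add: bridge_weight_def)
  next
    case 2
    then show ?thesis using outer[of x] r by (simp add: bridge_weight_def)
  next
    case 3
    have "AE \<omega> in P. real_cond_exp P (pf_filtration P B r u) (\<lambda>\<omega>. B r \<omega> + (B x \<omega> - B r \<omega>)) \<omega> =
        real_cond_exp P (pf_filtration P B r u) (B r) \<omega> +
        real_cond_exp P (pf_filtration P B r u) (\<lambda>\<omega>. B x \<omega> - B r \<omega>) \<omega>"
      using r 3 by (intro real_cond_exp_add integrable_B integrable_increment) auto
    moreover have "(\<lambda>\<omega>. B r \<omega> + (B x \<omega> - B r \<omega>)) = B x" by auto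
    ultimately have "AE \<omega> in P. real_cond_exp P (pf_filtration P B r u) (B x) \<omega> =
        real_cond_exp P (pf_filtration P B r u) (B r) \<omega> +
        real_cond_exp P (pf_filtration P B r u) (\<lambda>\<omega>. B x \<omega> - B r \<omega>) \<omega>"
      by simp
    moreover have "r \<in> {0..r} \<union> {u..}" using r by auto
    note outer[OF this] cond_exp_bridge_increment[OF r(1) 3]
    ultimately show ?thesis
      by eventually_elim (use 3 in \<open>simp add: bridge_weight_def\<close>)
  qed
qed

lemma cond_exp_increment:
  assumes r: "0 \<le> r" "r < u" and ab: "0 \<le> a" "a \<le> b"
  shows "AE \<omega> in P. real_cond_exp P (pf_filtration P B r u) (\<lambda>\<omega>. B b \<omega> - B a \<omega>) \<omega> =
    (B (min b r) \<omega> - B (min a r) \<omega>) + (B (max b u) \<omega> - B (max a u) \<omega>) +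
    (LINT x|lborel. indicator {r..<u} x * indicator {a..<b} x) / (u - r) * (B u \<omega> - B r \<omega>)"
proof -
  interpret sigma_finite_subalgebra P "pf_filtration P B r u"
    by (rule sigma_finite_subalgebra_pf_filtration)
  have weight: "bridge_weight r u b - bridge_weight r u a =
      (LINT x|lborel. indicator {r..<u} x * indicator {a..<b} x) / (u - r)"
    using bridge_weight_diff[OF r(2) ab(2)] r by (simp add: field_simps)
  have "AE \<omega> in P. real_cond_exp P (pf_filtration P B r u) (\<lambda>\<omega>. B b \<omega> - B a \<omega>) \<omega> =
      real_cond_exp P (pf_filtration P B r u) (B b) \<omega> - real_cond_exp P (pf_filtration P B r u) (B a) \<omega>"
    using ab by (intro real_cond_exp_diff integrable_B) auto
  then show ?thesis unfolding weight[symmetric] using cond_exp_B[OF r ab(1)] cond_exp_B[OF r order.trans[OF ab]]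
    by eventually_elim (simp only: ; simp add: algebra_simps)
qed

lemma cond_exp_step_integral:
  assumes r: "0 \<le> r" "r < u" and cs: "nonneg_intervals cs"
  shows "AE \<omega> in P. real_cond_exp P (pf_filtration P B r u) (step_integral B cs) \<omega> =
    step_integral B (outer_steps r u cs) \<omega> +
    (LINT x|lborel. indicator {r..<u} x * step_fun cs x) / (u - r) * (B u \<omega> - B r \<omega>)"
  using cs
proof (induction cs rule: list_of_triples_induct)
  interpret sigma_finite_subalgebra P "pf_filtration P B r u"
    by (rule sigma_finite_subalgebra_pf_filtration)
  case Nil
  have "AE \<omega> in P. real_cond_exp P (pf_filtration P B r u) (\<lambda>_. 0) \<omega> = 0"
    by (rule real_cond_exp_F_meas) auto
  then show ?case by (simp add: step_integral_Nil[abs_def] outer_steps_def)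
next
  interpret sigma_finite_subalgebra P "pf_filtration P B r u"
    by (rule sigma_finite_subalgebra_pf_filtration)
  case (Cons c a b cs)
  then have ab: "0 \<le> a" "a \<le> b" and cs: "nonneg_intervals cs" by auto
  have step_integral_Cons: "step_integral B ((c, a, b) # cs) = (\<lambda>\<omega>. c * (B b \<omega> - B a \<omega>) + step_integral B cs \<omega>)"
    by (simp add: fun_eq_iff)
  have integral_Cons: "(LINT x|lborel. indicator {r..<u} x * step_fun ((c, a, b) # cs) x) =
      c * (LINT x|lborel. indicator {r..<u} x * indicator {a..<b} x) + (LINT x|lborel. indicator {r..<u} x * step_fun cs x)"
    by (simp add: distrib_left mult.left_commute)
  have int: "integrable P (\<lambda>\<omega>. c * (B b \<omega> - B a \<omega>))" using integrable_increment[OF ab] by simp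
  have "AE \<omega> in P. real_cond_exp P (pf_filtration P B r u) (\<lambda>\<omega>. c * (B b \<omega> - B a \<omega>) + step_integral B cs \<omega>) \<omega> =
      c * real_cond_exp P (pf_filtration P B r u) (\<lambda>\<omega>. B b \<omega> - B a \<omega>) \<omega> +
      real_cond_exp P (pf_filtration P B r u) (step_integral B cs) \<omega>"
    using real_cond_exp_add[OF int integrable_step_integral[OF cs]] real_cond_exp_cmult[OF integrable_increment[OF ab], of c]
    by eventually_elim simp
  then show ?case unfolding step_integral_Cons integral_Cons
    using Cons.IH[OF cs] cond_exp_increment[OF r ab]
    by eventually_elim (simp add: outer_steps_def step_integral_append add_divide_distrib algebra_simps)
qed

section \<open>Wiener integrals\<close>

lemma wiener_integral_approx:
  assumes X: "wiener_integral P B f S X" and S: "S \<subseteq> {0..}" "S \<in> sets borel"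
    and f: "set_integrable lborel S f" and "0 < e"
  obtains cs where "\<forall>(c, a, b)\<in>set cs. {a..b} \<subseteq> S" "nonneg_intervals cs"
    "set_integrable lborel S (\<lambda>x. (f x - step_fun cs x)\<^sup>2)" "(LINT x:S|lborel. (f x - step_fun cs x)\<^sup>2) < e"
    "integrable P (\<lambda>\<omega>. (X \<omega> - step_integral B cs \<omega>)\<^sup>2)" "expectation (\<lambda>\<omega>. (X \<omega> - step_integral B cs \<omega>)\<^sup>2) < e"
proof -
  have [measurable]: "X \<in> borel_measurable P"
    using X measurable_from_gen_sigma unfolding wiener_integral_def by blast
  obtain cs where cs: "\<forall>(c, a, b)\<in>set cs. a \<le> b \<and> {a..b} \<subseteq> S"
    and L2_lborel: "(\<integral>\<^sup>+ x\<in>S. ennreal ((f x - step_fun cs x)\<^sup>2) \<partial>lborel) < ennreal e"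
    and L2_P: "(\<integral>\<^sup>+ \<omega>. ennreal ((X \<omega> - step_integral B cs \<omega>)\<^sup>2) \<partial>P) < ennreal e"
    using X \<open>0 < e\<close> unfolding wiener_integral_def by blast
  have "nonneg_intervals cs" using cs S(1) unfolding nonneg_intervals_def by fastforce
  have [measurable]: "S \<in> sets borel" "(\<lambda>x. indicator S x * f x) \<in> borel_measurable borel"
    using S f by (auto simp: set_integrable_def)
  have "(\<lambda>x. indicator S x * (f x - step_fun cs x)\<^sup>2) = (\<lambda>x. (indicator S x * f x - indicator S x * step_fun cs x)\<^sup>2)"
    by (auto simp: fun_eq_iff indicator_def)
  then have meas: "(\<lambda>x. indicator S x * (f x - step_fun cs x)\<^sup>2) \<in> borel_measurable lborel" by simp
  have nonneg: "0 \<le> indicator S x * (f x - step_fun cs x)\<^sup>2" for x by simp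
  have "(\<integral>\<^sup>+ x. ennreal (indicator S x * (f x - step_fun cs x)\<^sup>2) \<partial>lborel) =
      (\<integral>\<^sup>+ x\<in>S. ennreal ((f x - step_fun cs x)\<^sup>2) \<partial>lborel)"
    by (intro nn_integral_cong) (simp add: indicator_def)
  note lborel = nn_integral_less_imp_integral_less[OF meas nonneg, unfolded this, OF L2_lborel]
  note P = nn_integral_less_imp_integral_less[OF _ _ L2_P]
  show ?thesis
  proof (rule that)
    show "\<forall>(c, a, b)\<in>set cs. {a..b} \<subseteq> S" using cs by auto
    show "set_integrable lborel S (\<lambda>x. (f x - step_fun cs x)\<^sup>2)"
      using lborel(1) by (simp add: set_integrable_def)
    show "(LINT x:S|lborel. (f x - step_fun cs x)\<^sup>2) < e"
      using lborel(2) by (simp add: set_lebesgue_integral_def)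
  qed (use \<open>nonneg_intervals cs\<close> P in simp_all)
qed

lemma integrable_wiener_integral:
  assumes X: "wiener_integral P B f S X" and S: "S \<subseteq> {0..}" "S \<in> sets borel"
    and f: "set_integrable lborel S f"
  shows "integrable P X"
proof -
  have [measurable]: "X \<in> borel_measurable P"
    using X measurable_from_gen_sigma unfolding wiener_integral_def by blast
  obtain cs where cs: "nonneg_intervals cs" and L2: "integrable P (\<lambda>\<omega>. (X \<omega> - step_integral B cs \<omega>)\<^sup>2)"
    by (rule wiener_integral_approx[OF X S f, of 1]) auto
  have "integrable P (\<lambda>\<omega>. (X \<omega> - step_integral B cs \<omega>) + step_integral B cs \<omega>)"
    by (rule Bochner_Integration.integrable_add[OF integrable_expectation_abs_le_square(1)[OF _ L2, of 1]
          integrable_step_integral[OF cs]]) auto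
  then show ?thesis by simp
qed

lemma expectation_abs_cond_exp_error_le:
  assumes r: "0 \<le> r" "r < u" and X: "integrable P X" and XO: "integrable P XO"
    and cs: "nonneg_intervals cs" "nonneg_intervals csO"
  shows "expectation (\<lambda>\<omega>. \<bar>real_cond_exp P (pf_filtration P B r u) X \<omega> - (XO \<omega> + c / (u - r) * (B u \<omega> - B r \<omega>))\<bar>)
    \<le> expectation (\<lambda>\<omega>. \<bar>X \<omega> - step_integral B cs \<omega>\<bar>) +
      expectation (\<lambda>\<omega>. \<bar>step_integral B (outer_steps r u cs) \<omega> - step_integral B csO \<omega>\<bar>) +
      expectation (\<lambda>\<omega>. \<bar>XO \<omega> - step_integral B csO \<omega>\<bar>) +
      \<bar>(LINT x|lborel. indicator {r..<u} x * step_fun cs x) - c\<bar> / (u - r) * expectation (\<lambda>\<omega>. \<bar>B u \<omega> - B r \<omega>\<bar>)"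
    (is "expectation ?D \<le> _")
proof -
  interpret sigma_finite_subalgebra P "pf_filtration P B r u"
    by (rule sigma_finite_subalgebra_pf_filtration)
  define Y where "Y = real_cond_exp P (pf_filtration P B r u) (\<lambda>\<omega>. X \<omega> - step_integral B cs \<omega>)"
  define d where "d = ((LINT x|lborel. indicator {r..<u} x * step_fun cs x) - c) / (u - r)"
  have XY: "integrable P (\<lambda>\<omega>. X \<omega> - step_integral B cs \<omega>)"
    using X integrable_step_integral[OF cs(1)] by simp
  have ints: "integrable P (\<lambda>\<omega>. \<bar>Y \<omega>\<bar>)" "integrable P (\<lambda>\<omega>. \<bar>XO \<omega> - step_integral B csO \<omega>\<bar>)"
    "integrable P (\<lambda>\<omega>. \<bar>step_integral B (outer_steps r u cs) \<omega> - step_integral B csO \<omega>\<bar>)"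
    "integrable P (\<lambda>\<omega>. \<bar>d\<bar> * \<bar>B u \<omega> - B r \<omega>\<bar>)"
    using real_cond_exp_int(1)[OF XY] XO integrable_step_integral[OF cs(2)] r
      integrable_step_integral[OF nonneg_intervals_outer_steps[OF r(1) cs(1)]] integrable_increment[of r u]
    unfolding Y_def by auto
  have "integrable P ?D" using real_cond_exp_int(1)[OF X] XO integrable_increment[of r u] r by auto
  moreover have "AE \<omega> in P. ?D \<omega> \<le> \<bar>Y \<omega>\<bar> + \<bar>step_integral B (outer_steps r u cs) \<omega> - step_integral B csO \<omega>\<bar> +
      \<bar>XO \<omega> - step_integral B csO \<omega>\<bar> + \<bar>d\<bar> * \<bar>B u \<omega> - B r \<omega>\<bar>"
    using real_cond_exp_diff[OF X integrable_step_integral[OF cs(1)]] cond_exp_step_integral[OF r cs(1)]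
  proof eventually_elim
    case (elim \<omega>)
    have tri: "\<bar>a + b - e + g\<bar> \<le> \<bar>a\<bar> + \<bar>b\<bar> + \<bar>e\<bar> + \<bar>g\<bar>" for a b e g :: real by arith
    have eq: "real_cond_exp P (pf_filtration P B r u) X \<omega> - (XO \<omega> + c / (u - r) * (B u \<omega> - B r \<omega>)) =
        Y \<omega> + (step_integral B (outer_steps r u cs) \<omega> - step_integral B csO \<omega>) - (XO \<omega> - step_integral B csO \<omega>) +
        d * (B u \<omega> - B r \<omega>)"
      using elim by (simp add: Y_def d_def diff_divide_distrib algebra_simps)
    show ?case unfolding eq abs_mult[symmetric] by (rule tri)
  qed
  ultimately have "expectation ?D \<le> expectation (\<lambda>\<omega>. \<bar>Y \<omega>\<bar> +
      \<bar>step_integral B (outer_steps r u cs) \<omega> - step_integral B csO \<omega>\<bar> +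
      \<bar>XO \<omega> - step_integral B csO \<omega>\<bar> + \<bar>d\<bar> * \<bar>B u \<omega> - B r \<omega>\<bar>)"
    using ints by (intro integral_mono_AE) auto
  also have "\<dots> = expectation (\<lambda>\<omega>. \<bar>Y \<omega>\<bar>) +
      expectation (\<lambda>\<omega>. \<bar>step_integral B (outer_steps r u cs) \<omega> - step_integral B csO \<omega>\<bar>) +
      expectation (\<lambda>\<omega>. \<bar>XO \<omega> - step_integral B csO \<omega>\<bar>) + \<bar>d\<bar> * expectation (\<lambda>\<omega>. \<bar>B u \<omega> - B r \<omega>\<bar>)"
    using ints by simp
  also have "expectation (\<lambda>\<omega>. \<bar>Y \<omega>\<bar>) \<le> expectation (\<lambda>\<omega>. \<bar>X \<omega> - step_integral B cs \<omega>\<bar>)"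
    unfolding Y_def by (rule integral_abs_real_cond_exp_le[OF XY])
  finally show ?thesis using r by (simp add: d_def abs_divide)
qed

lemma cond_exp_wiener_integral_error_le:
  assumes r: "0 \<le> r" "r < u" and \<eta>: "0 < \<eta>"
    and S: "S \<subseteq> {0..}" "S \<in> sets borel"
    and SO: "SO \<in> sets borel" "SO \<subseteq> S" "SO \<inter> {r<..<u} = {}" "S - {r..<u} \<subseteq> SO"
    and f: "set_integrable lborel S f"
    and X: "wiener_integral P B f S X" and XO: "wiener_integral P B f SO XO"
  defines "c \<equiv> LINT x|lborel. indicator {r..<u} x * (indicator S x * f x)"
  shows "expectation (\<lambda>\<omega>. \<bar>real_cond_exp P (pf_filtration P B r u) X \<omega> - (XO \<omega> + c / (u - r) * (B u \<omega> - B r \<omega>))\<bar>)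
    \<le> (9 + (1 + (u - r)) / (u - r) * expectation (\<lambda>\<omega>. \<bar>B u \<omega> - B r \<omega>\<bar>)) * \<eta>"
proof -
  have SO0: "SO \<subseteq> {0..}" using SO(2) S(1) by auto
  have fO: "set_integrable lborel SO f" using set_integrable_subset[OF f _ SO(2)] SO(1) by simp
  have [measurable]: "X \<in> borel_measurable P" "XO \<in> borel_measurable P"
    using X XO measurable_from_gen_sigma unfolding wiener_integral_def by blast+
  obtain cs where cs: "\<forall>(c, a, b)\<in>set cs. {a..b} \<subseteq> S" "nonneg_intervals cs"
    and L2: "set_integrable lborel S (\<lambda>x. (f x - step_fun cs x)\<^sup>2)" "(LINT x:S|lborel. (f x - step_fun cs x)\<^sup>2) < \<eta>\<^sup>2"
      "integrable P (\<lambda>\<omega>. (X \<omega> - step_integral B cs \<omega>)\<^sup>2)" "expectation (\<lambda>\<omega>. (X \<omega> - step_integral B cs \<omega>)\<^sup>2) < \<eta>\<^sup>2"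
    by (rule wiener_integral_approx[OF X S f, of "\<eta>\<^sup>2"]) (use \<eta> in auto)
  obtain csO where csO: "\<forall>(c, a, b)\<in>set csO. {a..b} \<subseteq> SO" "nonneg_intervals csO"
    and L2O: "set_integrable lborel SO (\<lambda>x. (f x - step_fun csO x)\<^sup>2)" "(LINT x:SO|lborel. (f x - step_fun csO x)\<^sup>2) < \<eta>\<^sup>2"
      "integrable P (\<lambda>\<omega>. (XO \<omega> - step_integral B csO \<omega>)\<^sup>2)" "expectation (\<lambda>\<omega>. (XO \<omega> - step_integral B csO \<omega>)\<^sup>2) < \<eta>\<^sup>2"
    by (rule wiener_integral_approx[OF XO SO0 SO(1) fO, of "\<eta>\<^sup>2"]) (use \<eta> in auto)
  have "expectation (\<lambda>\<omega>. \<bar>X \<omega> - step_integral B cs \<omega>\<bar>) \<le> 2 * \<eta>"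
    using expectation_abs_le_of_square_le[OF _ L2(3) _ \<eta>, of 1] L2(4) by simp
  moreover have "expectation (\<lambda>\<omega>. \<bar>step_integral B (outer_steps r u cs) \<omega> - step_integral B csO \<omega>\<bar>) \<le> 5 * \<eta>"
    using expectation_abs_le_of_square_le[OF _ _ _ \<eta>, of _ 4]
      step_integral_isometry[OF nonneg_intervals_outer_steps[OF r(1) cs(2)] csO(2)]
      integral_outer_steps_diff_square_le[OF r(2) cs(1) csO(1) SO(2-4) L2(1) L2O(1)] L2(2) L2O(2)
    by simp
  moreover have "expectation (\<lambda>\<omega>. \<bar>XO \<omega> - step_integral B csO \<omega>\<bar>) \<le> 2 * \<eta>"
    using expectation_abs_le_of_square_le[OF _ L2O(3) _ \<eta>, of 1] L2O(4) by simp
  moreover have "\<bar>(LINT x|lborel. indicator {r..<u} x * step_fun cs x) - c\<bar> / (u - r) \<le> (1 + (u - r)) / (u - r) * \<eta>"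
  proof -
    have "\<bar>(LINT x|lborel. indicator {r..<u} x * step_fun cs x) - c\<bar>
        \<le> (LINT x:S|lborel. (f x - step_fun cs x)\<^sup>2) / \<eta> + \<eta> * (u - r)"
      unfolding c_def by (rule abs_integral_Ico_step_fun_diff_le[OF r(2) \<eta> cs(1) f L2(1)])
    also have "\<dots> \<le> \<eta>\<^sup>2 / \<eta> + \<eta> * (u - r)"
      using L2(2) \<eta> by (simp add: divide_right_mono)
    also have "\<dots> = (1 + (u - r)) * \<eta>" using \<eta> by (simp add: power2_eq_square algebra_simps)
    finally show ?thesis using r by (simp add: divide_right_mono)
  qed
  moreover have "0 \<le> expectation (\<lambda>\<omega>. \<bar>B u \<omega> - B r \<omega>\<bar>)" by simp
  ultimately have "expectation (\<lambda>\<omega>. \<bar>real_cond_exp P (pf_filtration P B r u) X \<omega> - (XO \<omega> + c / (u - r) * (B u \<omega> - B r \<omega>))\<bar>)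
      \<le> 2 * \<eta> + 5 * \<eta> + 2 * \<eta> + (1 + (u - r)) / (u - r) * \<eta> * expectation (\<lambda>\<omega>. \<bar>B u \<omega> - B r \<omega>\<bar>)"
    using expectation_abs_cond_exp_error_le[OF r integrable_wiener_integral[OF X S f]
        integrable_wiener_integral[OF XO SO0 SO(1) fO] cs(2) csO(2), of c]
    by (smt (verit, best) mult_right_mono)
  then show ?thesis by (simp add: algebra_simps)
qed

lemma cond_exp_wiener_integral:
  assumes r: "0 \<le> r" "r < u"
    and S: "S \<subseteq> {0..}" "S \<in> sets borel"
    and SO: "SO \<in> sets borel" "SO \<subseteq> S" "SO \<inter> {r<..<u} = {}" "S - {r..<u} \<subseteq> SO"
    and f: "set_integrable lborel S f"
    and X: "wiener_integral P B f S X" and XO: "wiener_integral P B f SO XO"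
  shows "AE \<omega> in P. real_cond_exp P (pf_filtration P B r u) X \<omega> =
    XO \<omega> + ((LINT x:S|lborel. f x) - (LINT x:SO|lborel. f x)) / (u - r) * (B u \<omega> - B r \<omega>)"
proof -
  interpret sigma_finite_subalgebra P "pf_filtration P B r u"
    by (rule sigma_finite_subalgebra_pf_filtration)
  define D where "D \<omega> = real_cond_exp P (pf_filtration P B r u) X \<omega> -
    (XO \<omega> + ((LINT x:S|lborel. f x) - (LINT x:SO|lborel. f x)) / (u - r) * (B u \<omega> - B r \<omega>))" for \<omega>
  define K where "K = 9 + (1 + (u - r)) / (u - r) * expectation (\<lambda>\<omega>. \<bar>B u \<omega> - B r \<omega>\<bar>)"
  have bound: "expectation (\<lambda>\<omega>. \<bar>D \<omega>\<bar>) \<le> K * \<eta>" if "0 < \<eta>" for \<eta>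
    using cond_exp_wiener_integral_error_le[OF r that S SO f X XO] set_integral_diff_gap[OF SO f]
    by (simp add: D_def K_def)
  have "0 \<le> K" using r by (simp add: K_def)
  have "expectation (\<lambda>\<omega>. \<bar>D \<omega>\<bar>) \<le> 0"
  proof (rule field_le_epsilon)
    fix e :: real assume "0 < e"
    then show "expectation (\<lambda>\<omega>. \<bar>D \<omega>\<bar>) \<le> 0 + e"
      using bound[of "e / (K + 1)"] \<open>0 \<le> K\<close> by (simp add: field_simps) (smt (verit) mult_left_mono)
  qed
  moreover have "integrable P D"
    using real_cond_exp_int(1)[OF integrable_wiener_integral[OF X S f]] r
      integrable_wiener_integral[OF XO order.trans[OF SO(2) S(1)] SO(1) set_integrable_subset[OF f _ SO(2)]]
      integrable_increment[of r u] SO(1)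
    unfolding D_def[abs_def] by auto
  ultimately have "AE \<omega> in P. \<bar>D \<omega>\<bar> = 0"
    by (subst integral_nonneg_eq_0_iff_AE[symmetric]) (auto intro: order.antisym)
  then show ?thesis by eventually_elim (simp add: D_def)
qed

lemma cond_exp_inner_increment:
  assumes "0 \<le> r" "r \<le> s" "s \<le> t" "t \<le> u" "r < u"
  shows "AE \<omega> in P. real_cond_exp P (pf_filtration P B r u) (\<lambda>\<omega>. B t \<omega> - B s \<omega>) \<omega> =
      (t - s) / (u - r) * (B u \<omega> - B r \<omega>)"
  using cond_exp_increment[of r u s t] assms by (simp add: integral_indicator_Ico_mult)

lemma measurable_pf_filtration_wiener_integral:
  "wiener_integral P B f S X \<Longrightarrow> S \<subseteq> {0..s} \<union> {t..} \<Longrightarrow> X \<in> borel_measurable (pf_filtration P B s t)"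
  unfolding pf_filtration_def wiener_integral_def by (blast intro: measurable_gen_sigma_mono)

lemma pf_process_integrable_measurable:
  fixes Im Ip :: "real \<Rightarrow> 'a \<Rightarrow> real"
  assumes fm: "set_integrable lborel {0..} fm" and fp: "set_integrable lborel {0..} fp"
    and Im: "\<And>s. 0 \<le> s \<Longrightarrow> wiener_integral P B fm {0..s} (Im s)"
    and Ip: "\<And>t. 0 \<le> t \<Longrightarrow> wiener_integral P B fp {t..} (Ip t)"
    and st: "0 \<le> s" "s < t"
  shows "integrable P (\<lambda>\<omega>. Im s \<omega> + Ip t \<omega> + (B t \<omega> - B s \<omega>) / (t - s) * K)"
    and "(\<lambda>\<omega>. Im s \<omega> + Ip t \<omega> + (B t \<omega> - B s \<omega>) / (t - s) * K) \<in> borel_measurable (pf_filtration P B s t)"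
proof -
  have "integrable P (Im s)" "integrable P (Ip t)"
    using st integrable_wiener_integral[OF Im _ _ set_integrable_subset[OF fm]]
      integrable_wiener_integral[OF Ip _ _ set_integrable_subset[OF fp]] by auto
  then show "integrable P (\<lambda>\<omega>. Im s \<omega> + Ip t \<omega> + (B t \<omega> - B s \<omega>) / (t - s) * K)"
    using st integrable_B[of s] integrable_B[of t] by auto
  have [measurable]: "Im s \<in> borel_measurable (pf_filtration P B s t)" "Ip t \<in> borel_measurable (pf_filtration P B s t)"
    "B s \<in> borel_measurable (pf_filtration P B s t)" "B t \<in> borel_measurable (pf_filtration P B s t)"
    using st measurable_pf_filtration_wiener_integral[OF Im] measurable_pf_filtration_wiener_integral[OF Ip]
    by (auto intro: B_measurable_pf_filtration)
  show "(\<lambda>\<omega>. Im s \<omega> + Ip t \<omega> + (B t \<omega> - B s \<omega>) / (t - s) * K) \<in> borel_measurable (pf_filtration P B s t)"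
    by measurable
qed

lemma cond_exp_pf_process:
  fixes Im Ip :: "real \<Rightarrow> 'a \<Rightarrow> real"
  assumes fm: "set_integrable lborel {0..} fm" and fp: "set_integrable lborel {0..} fp"
    and Im: "\<And>s. 0 \<le> s \<Longrightarrow> wiener_integral P B fm {0..s} (Im s)"
    and Ip: "\<And>t. 0 \<le> t \<Longrightarrow> wiener_integral P B fp {t..} (Ip t)"
    and rs: "0 \<le> r" "r < s" "s < t" "t < u"
  shows "AE \<omega> in P. real_cond_exp P (pf_filtration P B r u)
      (\<lambda>\<omega>. Im s \<omega> + Ip t \<omega> + (B t \<omega> - B s \<omega>) / (t - s) * (C - (LINT x:{0..s}|lborel. fm x) - (LINT x:{t..}|lborel. fp x))) \<omega> =
    Im r \<omega> + Ip u \<omega> + (B u \<omega> - B r \<omega>) / (u - r) * (C - (LINT x:{0..r}|lborel. fm x) - (LINT x:{u..}|lborel. fp x))"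
proof -
  interpret sigma_finite_subalgebra P "pf_filtration P B r u"
    by (rule sigma_finite_subalgebra_pf_filtration)
  define K where "K = (C - (LINT x:{0..s}|lborel. fm x) - (LINT x:{t..}|lborel. fp x)) / (t - s)"
  have fm_s: "set_integrable lborel {0..s} fm" and fp_t: "set_integrable lborel {t..} fp"
    using rs by (auto intro: set_integrable_subset[OF fm] set_integrable_subset[OF fp])
  have int: "integrable P (Im s)" "integrable P (Ip t)" "integrable P (\<lambda>\<omega>. B t \<omega> - B s \<omega>)"
    using integrable_wiener_integral[OF Im _ _ fm_s] integrable_wiener_integral[OF Ip _ _ fp_t]
      integrable_increment[of s t] rs by auto
  have linear: "AE \<omega> in P. real_cond_exp P (pf_filtration P B r u) (\<lambda>\<omega>. Im s \<omega> + Ip t \<omega> + K * (B t \<omega> - B s \<omega>)) \<omega> =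
      real_cond_exp P (pf_filtration P B r u) (Im s) \<omega> + real_cond_exp P (pf_filtration P B r u) (Ip t) \<omega> +
      K * real_cond_exp P (pf_filtration P B r u) (\<lambda>\<omega>. B t \<omega> - B s \<omega>) \<omega>"
    using real_cond_exp_add[OF Bochner_Integration.integrable_add[OF int(1,2)] integrable_mult_right[where c=K, OF int(3)]]
      real_cond_exp_add[OF int(1,2)] real_cond_exp_cmult[OF int(3), of K]
    by eventually_elim simp
  have past: "AE \<omega> in P. real_cond_exp P (pf_filtration P B r u) (Im s) \<omega> =
      Im r \<omega> + ((LINT x:{0..s}|lborel. fm x) - (LINT x:{0..r}|lborel. fm x)) / (u - r) * (B u \<omega> - B r \<omega>)"
    using rs by (intro cond_exp_wiener_integral fm_s Im) auto
  have future: "AE \<omega> in P. real_cond_exp P (pf_filtration P B r u) (Ip t) \<omega> =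
      Ip u \<omega> + ((LINT x:{t..}|lborel. fp x) - (LINT x:{u..}|lborel. fp x)) / (u - r) * (B u \<omega> - B r \<omega>)"
    using rs by (intro cond_exp_wiener_integral fp_t Ip) auto
  have rearrange: "Im r \<omega> + ((LINT x:{0..s}|lborel. fm x) - (LINT x:{0..r}|lborel. fm x)) / (u - r) * (B u \<omega> - B r \<omega>) +
      (Ip u \<omega> + ((LINT x:{t..}|lborel. fp x) - (LINT x:{u..}|lborel. fp x)) / (u - r) * (B u \<omega> - B r \<omega>)) +
      K * ((t - s) / (u - r) * (B u \<omega> - B r \<omega>)) =
    Im r \<omega> + Ip u \<omega> + (B u \<omega> - B r \<omega>) / (u - r) * (C - (LINT x:{0..r}|lborel. fm x) - (LINT x:{u..}|lborel. fp x))"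
    for \<omega>
  proof -
    have identity: "x + (a - b) / d * z + (y + (c - e) / d * z) + (k - a - c) / d * z = x + y + z / d * (k - b - e)"
      if "d \<noteq> 0" for x y a b c e k d z :: real
      using that by (simp add: field_simps)
    have K: "K * ((t - s) / (u - r) * (B u \<omega> - B r \<omega>)) =
        (C - (LINT x:{0..s}|lborel. fm x) - (LINT x:{t..}|lborel. fp x)) / (u - r) * (B u \<omega> - B r \<omega>)"
      using rs by (simp add: K_def)
    show ?thesis unfolding K by (rule identity) (use rs in simp)
  qed
  have process: "(\<lambda>\<omega>. Im s \<omega> + Ip t \<omega> + (B t \<omega> - B s \<omega>) / (t - s) * (C - (LINT x:{0..s}|lborel. fm x) - (LINT x:{t..}|lborel. fp x))) =
      (\<lambda>\<omega>. Im s \<omega> + Ip t \<omega> + K * (B t \<omega> - B s \<omega>))"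
    by (simp add: K_def fun_eq_iff)
  have inner: "AE \<omega> in P. real_cond_exp P (pf_filtration P B r u) (\<lambda>\<omega>. B t \<omega> - B s \<omega>) \<omega> =
      (t - s) / (u - r) * (B u \<omega> - B r \<omega>)"
    using rs by (intro cond_exp_inner_increment) auto
  show ?thesis unfolding process using linear past future inner by eventually_elim (simp only: rearrange)
qed

end

theorem mainTheorem6:
  fixes P :: "'a measure" and B :: "real \<Rightarrow> 'a \<Rightarrow> real"
    and fm fp :: "real \<Rightarrow> real" and C :: real
    and Im Ip :: "real \<Rightarrow> 'a \<Rightarrow> real"
  assumes "standard_BM P B"
    and "L1L2_pos fm" and "L1L2_pos fp"
    and "\<forall>s\<ge>0. wiener_integral P B fm {0..s} (Im s)"
    and "\<forall>t\<ge>0. wiener_integral P B fp {t..} (Ip t)"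
  shows "past_future_martingale P (pf_filtration P B)
           (\<lambda>s t \<omega>. Im s \<omega> + Ip t \<omega> + (B t \<omega> - B s \<omega>) / (t - s) *
               (C - (LINT u:{0..s}|lborel. fm u) - (LINT u:{t..}|lborel. fp u)))"
proof -
  interpret brownian_motion P B by unfold_locales (fact assms(1))
  have fm: "set_integrable lborel {0..} fm" and fp: "set_integrable lborel {0..} fp"
    using assms(2,3) by (simp_all add: L1L2_pos_def)
  have Im: "\<And>s. 0 \<le> s \<Longrightarrow> wiener_integral P B fm {0..s} (Im s)"
    and Ip: "\<And>t. 0 \<le> t \<Longrightarrow> wiener_integral P B fp {t..} (Ip t)"
    using assms(4,5) by auto
  show ?thesis
    unfolding past_future_martingale_def
    using pf_process_integrable_measurable[OF fm fp Im Ip] cond_exp_pf_process[OF fm fp Im Ip]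
    by blast
qed

end
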